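(* Let $A\in\mathbb{C}^{n\times n}$ be stable (all eigenvalues in the open left half-plane), let $B\in\mathbb{C}^{n\times r}$, and suppose $(A,B)$ is controllable. Let $X\in\mathbb{C}^{n\times n}$ solve the Lyapunov equation $AX+XA^*=-BB^*$, and let $s_1\ge s_2\ge\cdots\ge s_n>0$ be the singular values of $X$. Let $\omega_1\ge\omega_2\ge\cdots\ge\omega_n$ denote the eigenvalues of the Hermitian matrix $\tfrac12(A+A^* )$ (so $\omega_k$ is the $k$th rightmost). Then for all $k=1,\ldots,n$, $$\frac{s_k}{s_1}-1-\frac{\|B\|^2}{2s_1\|A\|}\;\le\;\frac{\omega_k}{\|A\|}\;\le\;1-\frac{s_{n-k+1}}{s_1}.$$
   Context: $\|\cdot\|$ denotes the vector 2-norm and the induced matrix (spectral) norm. $(A,B)$ controllable means the Krylov matrix $[B\ AB\ \cdots\ A^{n-1}B]$ has rank $n$. Under stability of $A$ and controllability of $(A,B)$, the solution $X$ of $AX+XA^*=-BB^*$ is unique and Hermitian positive definite, so its singular values equal its eigenvalues. *)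

theory Defs
  imports "HOL-Analysis.Analysis" "Jordan_Normal_Form.Schur_Decomposition" "Jordan_Normal_Form.DL_Rank"
begin

definition vnorm2 :: "complex vec \<Rightarrow> real" where
  "vnorm2 v = sqrt (\<Sum>i<dim_vec v. (cmod (v $ i))\<^sup>2)"

definition spec_norm :: "complex mat \<Rightarrow> real" where
  "spec_norm M = Sup {vnorm2 (M *\<^sub>v v) | v. v \<in> carrier_vec (dim_col M) \<and> vnorm2 v \<le> 1}"

definition stable_mat :: "complex mat \<Rightarrow> bool" where
  "stable_mat A \<longleftrightarrow> (\<forall>z. eigenvalue A z \<longrightarrow> Re z < 0)"

text \<open>Krylov matrix [B AB ... A^(n-1)B], of size n x (n*r); column j*r+c is column c of A^j B.\<close>
definition krylov_mat :: "complex mat \<Rightarrow> complex mat \<Rightarrow> complex mat" where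
  "krylov_mat A B = mat (dim_row A) (dim_row A * dim_col B)
     (\<lambda>(i, j). ((A ^\<^sub>m (j div dim_col B)) * B) $$ (i, j mod dim_col B))"

definition controllable :: "complex mat \<Rightarrow> complex mat \<Rightarrow> bool" where
  "controllable A B \<longleftrightarrow> vec_space.rank (dim_row A) (krylov_mat A B) = dim_row A"

text \<open>ws is the list of eigenvalues of the n x n matrix M, repeated by algebraic multiplicity,
  all real, in non-increasing order (w_1 \<ge> w_2 \<ge> ...).\<close>
definition sorted_real_eigenvalues :: "complex mat \<Rightarrow> real list \<Rightarrow> bool" where
  "sorted_real_eigenvalues M ws \<longleftrightarrow> length ws = dim_row M \<and> sorted_wrt (\<ge>) ws \<and>
     char_poly M = (\<Prod>w\<leftarrow>ws. [:- complex_of_real w, 1:])"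

definition singular_values :: "complex mat \<Rightarrow> real list \<Rightarrow> bool" where
  "singular_values M ss \<longleftrightarrow> (\<forall>s\<in>set ss. s \<ge> 0) \<and>
     sorted_real_eigenvalues (mat_adjoint M * M) (map (\<lambda>s. s\<^sup>2) ss)"

end

theory Submission
  imports Defs "Jordan_Normal_Form.Spectral_Radius" "HOL-Combinatorics.Permutations"
begin

text \<open>The Cayley transform \<open>C = (I - A)\<^sup>-\<^sup>1 (I + A)\<close> of the stable matrix \<open>A\<close> has
  spectral radius below 1, and the Lyapunov equation becomes a Stein equation
  \<open>\<langle>x, X y\<rangle> = \<langle>C\<^sup>* x, X C\<^sup>* y\<rangle> + 2 \<langle>Q\<^sup>* x, B B\<^sup>* Q\<^sup>* y\<rangle>\<close> with
  \<open>Q = (I - A)\<^sup>-\<^sup>1\<close>. Iterating it shows that \<open>X\<close> is Hermitian positive semidefinite, so its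
  singular values are eigenvalues with an orthonormal eigenbasis.
  Testing the Lyapunov equation against a vector \<open>v\<close> and writing \<open>X v = s\<^sub>1 v - y\<close> gives
  \<open>s\<^sub>1 Re \<langle>v, H v\<rangle> = Re \<langle>v, A y\<rangle> - \<parallel>B\<^sup>* v\<parallel>\<^sup>2 / 2\<close> for \<open>H = (A + A\<^sup>*) / 2\<close>, with \<open>y\<close> small when \<open>v\<close>
  lies in the span of the eigenvectors of the top singular values. Choosing \<open>v\<close> also in a span
  of eigenvectors of \<open>H\<close>, as in the Courant--Fischer theorem, bounds \<open>\<omega>\<^sub>k\<close> from both sides.\<close>

definition cinner :: "complex vec \<Rightarrow> complex vec \<Rightarrow> complex" where
  "cinner x y = (\<Sum>i<dim_vec x. cnj (x $ i) * y $ i)"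

lemma mat_adjoint_altdef:
  "mat_adjoint (M :: complex mat) = mat (dim_col M) (dim_row M) (\<lambda>(i, j). cnj (M $$ (j, i)))"
  by (rule eq_matI) (auto simp: mat_adjoint_def mat_of_rows_def)

lemma dim_mat_adjoint [simp]:
  "dim_row (mat_adjoint (M :: complex mat)) = dim_col M"
  "dim_col (mat_adjoint M) = dim_row M"
  by (simp_all add: mat_adjoint_altdef)

lemma index_mat_adjoint [simp]:
  "i < dim_col M \<Longrightarrow> j < dim_row M \<Longrightarrow> mat_adjoint (M :: complex mat) $$ (i, j) = cnj (M $$ (j, i))"
  by (simp add: mat_adjoint_altdef)

lemma mat_adjoint_carrier [simp]: "(M :: complex mat) \<in> carrier_mat n m \<Longrightarrow> mat_adjoint M \<in> carrier_mat m n"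
  by auto

lemma mat_adjoint_adjoint [simp]: "mat_adjoint (mat_adjoint (M :: complex mat)) = M"
  by (rule eq_matI) auto

lemma mat_adjoint_mult:
  assumes "M \<in> carrier_mat n m" "N \<in> carrier_mat m k"
  shows "mat_adjoint (M * N) = mat_adjoint N * mat_adjoint (M :: complex mat)"
  using assms by (intro eq_matI) (auto simp: scalar_prod_def cnj_sum intro!: sum.cong)

lemma mat_adjoint_add:
  assumes "M \<in> carrier_mat n m" "N \<in> carrier_mat n m"
  shows "mat_adjoint (M + N) = mat_adjoint M + mat_adjoint (N :: complex mat)"
  using assms by (intro eq_matI) auto

lemma mat_adjoint_minus:
  assumes "M \<in> carrier_mat n m" "N \<in> carrier_mat n m"
  shows "mat_adjoint (M - N) = mat_adjoint M - mat_adjoint (N :: complex mat)"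
  using assms by (intro eq_matI) auto

lemma mat_adjoint_smult: "mat_adjoint (c \<cdot>\<^sub>m M) = cnj c \<cdot>\<^sub>m mat_adjoint (M :: complex mat)"
  by (rule eq_matI) auto

lemma mat_adjoint_one [simp]: "mat_adjoint (1\<^sub>m n :: complex mat) = 1\<^sub>m n"
  by (rule eq_matI) auto

lemma index_mult_mat_sum:
  "A \<in> carrier_mat n k \<Longrightarrow> B \<in> carrier_mat k m \<Longrightarrow> i < n \<Longrightarrow> j < m \<Longrightarrow>
   (A * B) $$ (i, j) = (\<Sum>l<k. A $$ (i, l) * B $$ (l, j))"
  by (auto simp: scalar_prod_def atLeast0LessThan intro!: sum.cong)

lemma smult_mult_mat_vec:
  "M \<in> carrier_mat n m \<Longrightarrow> v \<in> carrier_vec m \<Longrightarrow> (c \<cdot>\<^sub>m M) *\<^sub>v v = c \<cdot>\<^sub>v (M *\<^sub>v (v :: complex vec))"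
  by (rule eq_vecI) (auto simp: scalar_prod_def sum_distrib_left algebra_simps intro!: sum.cong)

lemma cinner_mult_mat_vec:
  assumes "(M :: complex mat) \<in> carrier_mat n m" "x \<in> carrier_vec n" "y \<in> carrier_vec m"
  shows "cinner x (M *\<^sub>v y) = cinner (mat_adjoint M *\<^sub>v x) y"
proof -
  have "cinner x (M *\<^sub>v y) = (\<Sum>i<n. \<Sum>j<m. cnj (x $ i) * M $$ (i, j) * y $ j)"
    using assms by (auto simp: cinner_def scalar_prod_def sum_distrib_left mult.assoc atLeast0LessThan
        intro!: sum.cong)
  also have "\<dots> = (\<Sum>j<m. \<Sum>i<n. cnj (x $ i) * M $$ (i, j) * y $ j)"
    by (rule sum.swap)
  also have "\<dots> = cinner (mat_adjoint M *\<^sub>v x) y"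
    using assms by (auto simp: cinner_def scalar_prod_def sum_distrib_right cnj_sum atLeast0LessThan
        intro!: sum.cong)
  finally show ?thesis .
qed

lemma cinner_commute: "dim_vec x = dim_vec y \<Longrightarrow> cinner y x = cnj (cinner x y)"
  by (auto simp: cinner_def cnj_sum intro!: sum.cong)

lemma cinner_add_right:
  "x \<in> carrier_vec n \<Longrightarrow> y \<in> carrier_vec n \<Longrightarrow> z \<in> carrier_vec n \<Longrightarrow> cinner x (y + z) = cinner x y + cinner x z"
  by (auto simp: cinner_def sum.distrib algebra_simps)

lemma cinner_diff_right:
  "x \<in> carrier_vec n \<Longrightarrow> y \<in> carrier_vec n \<Longrightarrow> z \<in> carrier_vec n \<Longrightarrow> cinner x (y - z) = cinner x y - cinner x z"
  by (auto simp: cinner_def sum_subtractf algebra_simps)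

lemma cinner_smult_right: "x \<in> carrier_vec n \<Longrightarrow> y \<in> carrier_vec n \<Longrightarrow> cinner x (c \<cdot>\<^sub>v y) = c * cinner x y"
  by (auto simp: cinner_def sum_distrib_left algebra_simps)

lemma cinner_uminus_right: "dim_vec y = dim_vec x \<Longrightarrow> cinner x (- y) = - cinner x y"
  by (simp add: cinner_def sum_negf)

lemma cinner_zero_right [simp]: "cinner x (0\<^sub>v (dim_vec x)) = 0"
  by (simp add: cinner_def)

lemma cnj_mult_self: "cnj z * z = complex_of_real ((cmod z)\<^sup>2)"
  using complex_norm_square[of z] by (simp add: mult.commute)

lemma cinner_self: "cinner x x = complex_of_real ((vnorm2 x)\<^sup>2)"
  by (simp add: cinner_def vnorm2_def cnj_mult_self sum_nonneg)

lemma vnorm2_nonneg: "vnorm2 x \<ge> 0"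
  by (simp add: vnorm2_def sum_nonneg)

lemma vnorm2_L2_set: "vnorm2 x = L2_set (\<lambda>i. cmod (x $ i)) {..<dim_vec x}"
  by (simp add: vnorm2_def L2_set_def)

lemma cmod_cinner_le:
  assumes "dim_vec x = dim_vec y"
  shows "cmod (cinner x y) \<le> vnorm2 x * vnorm2 y"
proof -
  have "cmod (cinner x y) \<le> (\<Sum>i<dim_vec x. cmod (cnj (x $ i) * y $ i))"
    unfolding cinner_def by (rule norm_sum)
  also have "\<dots> = (\<Sum>i<dim_vec x. \<bar>cmod (x $ i)\<bar> * \<bar>cmod (y $ i)\<bar>)"
    by (simp add: norm_mult)
  also have "\<dots> \<le> L2_set (\<lambda>i. cmod (x $ i)) {..<dim_vec x} * L2_set (\<lambda>i. cmod (y $ i)) {..<dim_vec x}"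
    by (rule L2_set_mult_ineq)
  finally show ?thesis
    using assms by (simp add: vnorm2_L2_set)
qed

lemma vnorm2_eq_0_iff: "vnorm2 x = 0 \<longleftrightarrow> x = 0\<^sub>v (dim_vec x)"
proof
  assume "vnorm2 x = 0"
  then have "(\<Sum>i<dim_vec x. (cmod (x $ i))\<^sup>2) = 0"
    by (simp add: vnorm2_def sum_nonneg)
  then show "x = 0\<^sub>v (dim_vec x)"
    by (subst (asm) sum_nonneg_eq_0_iff) (auto intro!: eq_vecI)
next
  assume "x = 0\<^sub>v (dim_vec x)"
  then have "\<forall>i<dim_vec x. x $ i = 0"
    by (metis index_zero_vec(1))
  then show "vnorm2 x = 0"
    by (simp add: vnorm2_def)
qed

lemma vnorm2_pos_iff: "vnorm2 x > 0 \<longleftrightarrow> x \<noteq> 0\<^sub>v (dim_vec x)"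
  using vnorm2_eq_0_iff[of x] vnorm2_nonneg[of x] by linarith

lemma vnorm2_smult: "vnorm2 (c \<cdot>\<^sub>v x) = cmod c * vnorm2 x"
proof -
  have "vnorm2 (c \<cdot>\<^sub>v x) = sqrt ((cmod c)\<^sup>2 * (\<Sum>i<dim_vec x. (cmod (x $ i))\<^sup>2))"
    by (simp add: vnorm2_def sum_distrib_left norm_mult power_mult_distrib)
  also have "\<dots> = cmod c * vnorm2 x"
    by (simp add: vnorm2_def real_sqrt_mult)
  finally show ?thesis .
qed

lemma vnorm2_eq_1_iff_cinner: "vnorm2 x = 1 \<longleftrightarrow> cinner x x = 1"
proof -
  have "cinner x x = 1 \<longleftrightarrow> (vnorm2 x)\<^sup>2 = 1"
    by (metis cinner_self of_real_eq_1_iff)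
  then show ?thesis
    using vnorm2_nonneg[of x] by (auto simp: power2_eq_1_iff)
qed

lemma cscalar_prod_eq_cinner: "dim_vec x = dim_vec y \<Longrightarrow> x \<bullet>c y = cnj (cinner x y)"
  by (auto simp: cinner_def scalar_prod_def cnj_sum atLeast0LessThan mult.commute intro!: sum.cong)

lemma index_adjoint_mult_self:
  assumes "W \<in> carrier_mat n m" "i < m" "j < m"
  shows "(mat_adjoint W * W) $$ (i, j) = cinner (col W i) (col (W :: complex mat) j)"
  using assms by (auto simp: cinner_def scalar_prod_def atLeast0LessThan intro!: sum.cong)

lemma cinner_unit_vec_mult:
  assumes "M \<in> carrier_mat n n" "i < n" "j < n"
  shows "cinner (unit_vec n i) (M *\<^sub>v unit_vec n j) = M $$ (i, j)"
proof -
  have "cinner (unit_vec n i) (M *\<^sub>v unit_vec n j)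
      = (\<Sum>k\<in>{i}. cnj (unit_vec n i $ k) * (M *\<^sub>v unit_vec n j) $ k)"
    unfolding cinner_def using assms by (intro sum.mono_neutral_right) (auto simp: unit_vec_def)
  then show ?thesis
    using assms by simp
qed

definition orthonormal :: "nat \<Rightarrow> nat set \<Rightarrow> (nat \<Rightarrow> complex vec) \<Rightarrow> bool" where
  "orthonormal n J e \<longleftrightarrow> (\<forall>j\<in>J. e j \<in> carrier_vec n) \<and>
     (\<forall>i\<in>J. \<forall>j\<in>J. cinner (e i) (e j) = (if i = j then 1 else 0))"

lemma orthonormal_subset: "orthonormal n J e \<Longrightarrow> K \<subseteq> J \<Longrightarrow> orthonormal n K e"
  unfolding orthonormal_def by blast

lemma orthonormal_carrier: "orthonormal n J e \<Longrightarrow> j \<in> J \<Longrightarrow> e j \<in> carrier_vec n"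
  by (simp add: orthonormal_def)

lemma orthonormal_cinner_sum:
  fixes e :: "nat \<Rightarrow> complex vec"
  assumes "orthonormal n J e" "i \<in> J" "j \<in> J"
  shows "(\<Sum>k<n. cnj (e i $ k) * e j $ k) = (if i = j then 1 else 0)"
proof -
  have "dim_vec (e i) = n" "cinner (e i) (e j) = (if i = j then 1 else 0)"
    using assms unfolding orthonormal_def by auto
  then show ?thesis
    by (simp add: cinner_def)
qed

definition lin_comb :: "nat \<Rightarrow> nat set \<Rightarrow> (nat \<Rightarrow> complex) \<Rightarrow> (nat \<Rightarrow> complex vec) \<Rightarrow> complex vec" where
  "lin_comb n J \<alpha> e = vec n (\<lambda>i. \<Sum>j\<in>J. \<alpha> j * e j $ i)"

lemma lin_comb_carrier [simp]: "lin_comb n J \<alpha> e \<in> carrier_vec n"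
  by (simp add: lin_comb_def)

lemma lin_comb_diff: "c \<cdot>\<^sub>v lin_comb n J \<alpha> e - lin_comb n J \<beta> e = lin_comb n J (\<lambda>j. c * \<alpha> j - \<beta> j) e"
  by (rule eq_vecI) (auto simp: lin_comb_def sum_distrib_left sum_subtractf algebra_simps)

lemma mult_mat_vec_lin_comb:
  assumes M: "M \<in> carrier_mat n n" and e: "\<And>j. j \<in> J \<Longrightarrow> e j \<in> carrier_vec n"
    and eigen: "\<And>j. j \<in> J \<Longrightarrow> M *\<^sub>v e j = c j \<cdot>\<^sub>v e j"
  shows "M *\<^sub>v lin_comb n J \<alpha> e = lin_comb n J (\<lambda>j. \<alpha> j * c j) e"
proof (rule eq_vecI)
  fix i assume "i < dim_vec (lin_comb n J (\<lambda>j. \<alpha> j * c j) e)"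
  then have i: "i < n"
    by (simp add: lin_comb_def)
  have dim: "dim_vec (e j) = n" if "j \<in> J" for j
    using e that by auto
  have "(M *\<^sub>v lin_comb n J \<alpha> e) $ i = (\<Sum>k<n. M $$ (i, k) * (\<Sum>j\<in>J. \<alpha> j * e j $ k))"
    using M i by (simp add: lin_comb_def scalar_prod_def atLeast0LessThan)
  also have "\<dots> = (\<Sum>j\<in>J. \<alpha> j * (\<Sum>k<n. M $$ (i, k) * e j $ k))"
    by (simp add: sum_distrib_left algebra_simps) (subst sum.swap, simp)
  also have "\<dots> = (\<Sum>j\<in>J. \<alpha> j * (M *\<^sub>v e j) $ i)"
    using M i dim by (intro sum.cong) (auto simp: scalar_prod_def atLeast0LessThan)
  also have "\<dots> = (\<Sum>j\<in>J. \<alpha> j * c j * e j $ i)"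
    using i dim by (intro sum.cong) (auto simp: eigen)
  finally show "(M *\<^sub>v lin_comb n J \<alpha> e) $ i = lin_comb n J (\<lambda>j. \<alpha> j * c j) e $ i"
    using i by (simp add: lin_comb_def)
qed (use M in \<open>auto simp: lin_comb_def\<close>)

lemma cinner_lin_comb:
  assumes o: "orthonormal n J e" and J: "finite J"
  shows "cinner (lin_comb n J \<alpha> e) (lin_comb n J \<beta> e) = (\<Sum>j\<in>J. cnj (\<alpha> j) * \<beta> j)"
proof -
  have "cinner (lin_comb n J \<alpha> e) (lin_comb n J \<beta> e)
      = (\<Sum>i\<in>J. \<Sum>j\<in>J. cnj (\<alpha> i) * \<beta> j * (\<Sum>k<n. cnj (e i $ k) * e j $ k))"
    by (simp add: cinner_def lin_comb_def cnj_sum sum_distrib_left sum_distrib_right algebra_simps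
        sum.swap[of _ "{..<n}"])
  also have "\<dots> = (\<Sum>i\<in>J. \<Sum>j\<in>J. if i = j then cnj (\<alpha> i) * \<beta> j else 0)"
    using o by (intro sum.cong refl) (simp add: orthonormal_cinner_sum)
  finally show ?thesis
    using J by simp
qed

lemma cinner_lin_comb_single:
  assumes o: "orthonormal n J e" and J: "finite J" and i: "i \<in> J"
  shows "cinner (e i) (lin_comb n J \<alpha> e) = \<alpha> i"
proof -
  have "cinner (e i) (lin_comb n J \<alpha> e) = (\<Sum>j\<in>J. \<alpha> j * (\<Sum>k<n. cnj (e i $ k) * e j $ k))"
    using orthonormal_carrier[OF o i]
    by (simp add: cinner_def lin_comb_def sum_distrib_left sum_distrib_right algebra_simps
        sum.swap[of _ "{..<n}"])
  also have "\<dots> = (\<Sum>j\<in>J. if i = j then \<alpha> j else 0)"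
    using o i by (intro sum.cong refl) (simp add: orthonormal_cinner_sum)
  finally show ?thesis
    using J i by simp
qed

lemma lin_comb_eq_0_coeff:
  assumes "orthonormal n J e" "finite J" "lin_comb n J \<alpha> e = 0\<^sub>v n" "j \<in> J"
  shows "\<alpha> j = 0"
  using cinner_lin_comb_single[OF assms(1,2,4), of \<alpha>] orthonormal_carrier[OF assms(1,4)] assms(3)
  by (metis carrier_vecD cinner_zero_right)

lemma vnorm2_lin_comb:
  assumes "orthonormal n J e" "finite J"
  shows "(vnorm2 (lin_comb n J \<alpha> e))\<^sup>2 = (\<Sum>j\<in>J. (cmod (\<alpha> j))\<^sup>2)"
proof -
  have "complex_of_real ((vnorm2 (lin_comb n J \<alpha> e))\<^sup>2) = complex_of_real (\<Sum>j\<in>J. (cmod (\<alpha> j))\<^sup>2)"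
    unfolding cinner_self[symmetric] cinner_lin_comb[OF assms] cnj_mult_self by simp
  then show ?thesis
    using of_real_eq_iff by blast
qed

lemma orthonormal_spans_intersect:
  assumes a: "orthonormal n {..<p} a" and b: "orthonormal n {..<q} b" and pq: "n < p + q"
  shows "\<exists>\<alpha> \<beta>. lin_comb n {..<p} \<alpha> a = lin_comb n {..<q} \<beta> b \<and> lin_comb n {..<p} \<alpha> a \<noteq> 0\<^sub>v n"
proof -
  define m where "m = p + q"
  define M :: "complex mat" where "M = mat m m (\<lambda>(i, j).
    if i < n then (if j < p then a j $ i else - (b (j - p) $ i)) else 0)"
  have M: "M \<in> carrier_mat m m"
    by (simp add: M_def)
  have last_row: "m - 1 < m" "n \<le> m - 1"
    using pq by (auto simp: m_def)
  have "M = mat\<^sub>r m m (\<lambda>i. if i = m - 1 then 0\<^sub>v m else row M i)"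
    using last_row by (intro eq_matI) (auto simp: M_def)
  also have "det \<dots> = 0"
    using M by (intro det_row_0[OF last_row(1)]) auto
  finally obtain c where c: "c \<in> carrier_vec m" "c \<noteq> 0\<^sub>v m" "M *\<^sub>v c = 0\<^sub>v m"
    using det_0_iff_vec_prod_zero_field[OF M] by auto
  define \<alpha> where "\<alpha> j = c $ j" for j
  define \<beta> where "\<beta> j = c $ (p + j)" for j
  have eq: "lin_comb n {..<p} \<alpha> a = lin_comb n {..<q} \<beta> b"
  proof (rule eq_vecI)
    fix i assume "i < dim_vec (lin_comb n {..<q} \<beta> b)"
    then have i: "i < n" "i < m"
      using last_row by (auto simp: lin_comb_def)
    have "0 = (\<Sum>j<p + q. M $$ (i, j) * c $ j)"
      using arg_cong[OF c(3), of "\<lambda>v. v $ i"] M c(1) i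
      by (simp add: scalar_prod_def atLeast0LessThan m_def)
    also have "\<dots> = (\<Sum>j<p. M $$ (i, j) * c $ j) + (\<Sum>j<q. M $$ (i, p + j) * c $ (p + j))"
      by (induct q) (auto simp: add.assoc)
    also have "\<dots> = (\<Sum>j<p. \<alpha> j * a j $ i) - (\<Sum>j<q. \<beta> j * b j $ i)"
      using i by (simp add: M_def m_def \<alpha>_def \<beta>_def sum_negf mult.commute)
    finally show "lin_comb n {..<p} \<alpha> a $ i = lin_comb n {..<q} \<beta> b $ i"
      using i by (simp add: lin_comb_def)
  qed (simp add: lin_comb_def)
  have "lin_comb n {..<p} \<alpha> a \<noteq> 0\<^sub>v n"
  proof
    assume zero: "lin_comb n {..<p} \<alpha> a = 0\<^sub>v n"
    have "c $ j = 0" if "j < m" for j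
    proof (cases "j < p")
      case True
      then show ?thesis
        using lin_comb_eq_0_coeff[OF a _ zero, of j] by (simp add: \<alpha>_def)
    next
      case False
      then have "\<beta> (j - p) = 0"
        using lin_comb_eq_0_coeff[OF b _ zero[unfolded eq], of "j - p"] that by (simp add: m_def)
      then show ?thesis
        using False by (simp add: \<beta>_def)
    qed
    then have "c = 0\<^sub>v m"
      using c(1) by (intro eq_vecI) auto
    with c(2) show False ..
  qed
  with eq show ?thesis
    by blast
qed

definition entrywise_norm :: "complex mat \<Rightarrow> real" where
  "entrywise_norm M = (\<Sum>i<dim_row M. \<Sum>j<dim_col M. cmod (M $$ (i, j)))"

lemma entrywise_norm_nonneg: "entrywise_norm M \<ge> 0"
  by (simp add: entrywise_norm_def sum_nonneg)

lemma entrywise_norm_adjoint: "entrywise_norm (mat_adjoint M) = entrywise_norm M"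
  unfolding entrywise_norm_def by (simp, subst sum.swap, simp)

lemma entrywise_norm_le:
  assumes "M \<in> carrier_mat n n" "\<And>i j. i < n \<Longrightarrow> j < n \<Longrightarrow> cmod (M $$ (i, j)) \<le> c"
  shows "entrywise_norm M \<le> real n * real n * c"
proof -
  have "entrywise_norm M = (\<Sum>i<n. \<Sum>j<n. cmod (M $$ (i, j)))"
    using assms(1) by (simp add: entrywise_norm_def)
  also have "\<dots> \<le> (\<Sum>i<n. \<Sum>j<n. c)"
    using assms(2) by (intro sum_mono) auto
  finally show ?thesis
    by simp
qed

lemma vnorm2_mult_mat_vec_le_entrywise:
  assumes M: "M \<in> carrier_mat n m" and v: "v \<in> carrier_vec m"
  shows "vnorm2 (M *\<^sub>v v) \<le> entrywise_norm M * vnorm2 v"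
proof -
  have "vnorm2 (M *\<^sub>v v) \<le> (\<Sum>i<n. \<bar>cmod ((M *\<^sub>v v) $ i)\<bar>)"
    unfolding vnorm2_L2_set using M L2_set_le_sum_abs[of "\<lambda>i. cmod ((M *\<^sub>v v) $ i)" "{..<n}"] by simp
  also have "\<dots> \<le> (\<Sum>i<n. \<Sum>j<m. cmod (M $$ (i, j)) * vnorm2 v)"
  proof (rule sum_mono)
    fix i assume "i \<in> {..<n}"
    then have "cmod ((M *\<^sub>v v) $ i) = cmod (\<Sum>j<m. M $$ (i, j) * v $ j)"
      using M v by (simp add: scalar_prod_def atLeast0LessThan)
    also have "\<dots> \<le> (\<Sum>j<m. cmod (M $$ (i, j) * v $ j))"
      by (rule norm_sum)
    also have "\<dots> \<le> (\<Sum>j<m. cmod (M $$ (i, j)) * vnorm2 v)"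
      unfolding vnorm2_L2_set using v
      by (intro sum_mono) (auto simp: norm_mult intro!: mult_left_mono member_le_L2_set)
    finally show "\<bar>cmod ((M *\<^sub>v v) $ i)\<bar> \<le> (\<Sum>j<m. cmod (M $$ (i, j)) * vnorm2 v)"
      by simp
  qed
  also have "\<dots> = entrywise_norm M * vnorm2 v"
    using M by (simp add: entrywise_norm_def sum_distrib_right)
  finally show ?thesis .
qed

lemma spec_norm_upper:
  assumes "v \<in> carrier_vec (dim_col M)" "vnorm2 v \<le> 1"
  shows "vnorm2 (M *\<^sub>v v) \<le> spec_norm M"
proof -
  have "bdd_above {vnorm2 (M *\<^sub>v v) | v. v \<in> carrier_vec (dim_col M) \<and> vnorm2 v \<le> 1}"
  proof (rule bdd_aboveI, clarify)
    fix v assume "v \<in> carrier_vec (dim_col M)" "vnorm2 v \<le> 1"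
    then show "vnorm2 (M *\<^sub>v v) \<le> entrywise_norm M"
      using vnorm2_mult_mat_vec_le_entrywise[of M _ _ v] entrywise_norm_nonneg[of M]
      by (metis carrier_mat_triv mult_left_le order_trans)
  qed
  then show ?thesis
    unfolding spec_norm_def using assms by (intro cSup_upper) auto
qed

lemma spec_norm_nonneg: "spec_norm M \<ge> 0"
  using spec_norm_upper[of "0\<^sub>v (dim_col M)" M] vnorm2_nonneg order_trans
  by (simp add: vnorm2_def)

lemma spec_norm_bound:
  assumes M: "M \<in> carrier_mat n m" and v: "v \<in> carrier_vec m"
  shows "vnorm2 (M *\<^sub>v v) \<le> spec_norm M * vnorm2 v"
proof (cases "v = 0\<^sub>v m")
  case True
  then show ?thesis
    using M by (simp add: vnorm2_def)
next
  case False
  then have pos: "vnorm2 v > 0"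
    using v vnorm2_pos_iff by auto
  define u where "u = (1 / complex_of_real (vnorm2 v)) \<cdot>\<^sub>v v"
  have u: "u \<in> carrier_vec (dim_col M)" "vnorm2 u \<le> 1"
    unfolding u_def vnorm2_smult using v M pos by (auto simp: norm_divide)
  have "vnorm2 (M *\<^sub>v u) = vnorm2 (M *\<^sub>v v) / vnorm2 v"
    unfolding u_def mult_mat_vec[OF M v] vnorm2_smult using pos by (simp add: norm_divide)
  with spec_norm_upper[OF u] pos show ?thesis
    by (simp add: field_simps)
qed

lemma cmod_cinner_mult_mat_vec_le:
  assumes "M \<in> carrier_mat n n" "x \<in> carrier_vec n" "y \<in> carrier_vec n"
  shows "cmod (cinner x (M *\<^sub>v y)) \<le> spec_norm M * vnorm2 x * vnorm2 y"
proof -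
  have "cmod (cinner x (M *\<^sub>v y)) \<le> vnorm2 x * vnorm2 (M *\<^sub>v y)"
    using assms by (intro cmod_cinner_le) simp
  also have "\<dots> \<le> vnorm2 x * (spec_norm M * vnorm2 y)"
    using assms by (intro mult_left_mono spec_norm_bound vnorm2_nonneg)
  finally show ?thesis
    by (simp add: ac_simps)
qed

lemma vnorm2_adjoint_mult_le:
  assumes B: "B \<in> carrier_mat n r" and v: "v \<in> carrier_vec n"
  shows "vnorm2 (mat_adjoint B *\<^sub>v v) \<le> spec_norm B * vnorm2 v"
proof -
  define t where "t = vnorm2 (mat_adjoint B *\<^sub>v v)"
  have Bv: "mat_adjoint B *\<^sub>v v \<in> carrier_vec r"
    using B v by (simp add: mult_mat_vec_carrier[OF mat_adjoint_carrier[OF B]])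
  have "t\<^sup>2 = Re (cinner v (B *\<^sub>v (mat_adjoint B *\<^sub>v v)))"
    using cinner_mult_mat_vec[OF B v Bv] by (simp add: t_def cinner_self)
  also have "\<dots> \<le> cmod (cinner v (B *\<^sub>v (mat_adjoint B *\<^sub>v v)))"
    by (rule complex_Re_le_cmod)
  also have "\<dots> \<le> vnorm2 v * vnorm2 (B *\<^sub>v (mat_adjoint B *\<^sub>v v))"
    using B v by (intro cmod_cinner_le) simp
  also have "\<dots> \<le> vnorm2 v * (spec_norm B * t)"
    unfolding t_def by (rule mult_left_mono[OF spec_norm_bound[OF B Bv] vnorm2_nonneg])
  finally have "t * t \<le> t * (spec_norm B * vnorm2 v)"
    by (simp add: power2_eq_square algebra_simps)
  then show ?thesis
    using vnorm2_nonneg[of "mat_adjoint B *\<^sub>v v"] spec_norm_nonneg[of B] vnorm2_nonneg[of v]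
    unfolding t_def by (cases "t = 0") (auto simp: t_def mult_le_cancel_left)
qed

lemma spec_norm_pos_if_stable:
  assumes A: "A \<in> carrier_mat n n" and n: "n > 0" and stab: "stable_mat A"
  shows "spec_norm A > 0"
proof -
  obtain z where ev: "eigenvalue A z"
    using spectrum_non_empty[OF A n] by (auto simp: spectrum_def)
  then obtain v where v: "v \<in> carrier_vec n" "v \<noteq> 0\<^sub>v n" "A *\<^sub>v v = z \<cdot>\<^sub>v v"
    using A by (auto simp: eigenvalue_def eigenvector_def)
  have "z \<noteq> 0"
    using stab ev unfolding stable_mat_def by force
  moreover have "cmod z * vnorm2 v \<le> spec_norm A * vnorm2 v"
    using spec_norm_bound[OF A v(1)] v(3) by (simp add: vnorm2_smult)
  moreover have "vnorm2 v > 0"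
    using v vnorm2_pos_iff by auto
  ultimately show ?thesis
    by (smt (verit) mult_le_cancel_right zero_less_norm_iff)
qed

section \<open>Spectral theorem for Hermitian matrices\<close>

definition unitary_mat :: "nat \<Rightarrow> complex mat \<Rightarrow> bool" where
  "unitary_mat n U \<longleftrightarrow> U \<in> carrier_mat n n \<and> mat_adjoint U * U = 1\<^sub>m n"

lemma unitary_mat_right_inverse: "unitary_mat n U \<Longrightarrow> U * mat_adjoint U = 1\<^sub>m n"
  unfolding unitary_mat_def using mat_mult_left_right_inverse[of "mat_adjoint U" n U] by auto

lemma unitary_mat_mult:
  assumes U: "unitary_mat n U" and V: "unitary_mat n V"
  shows "unitary_mat n (U * V)"
proof -
  have c: "U \<in> carrier_mat n n" "V \<in> carrier_mat n n"
    using U V by (auto simp: unitary_mat_def)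
  have "mat_adjoint (U * V) * (U * V) = mat_adjoint V * ((mat_adjoint U * U) * V)"
    using c by (simp add: mat_adjoint_mult[OF c] assoc_mult_mat[of _ n n _ n _ n])
  also have "\<dots> = 1\<^sub>m n"
    using U V c by (simp add: unitary_mat_def)
  finally show ?thesis
    using c by (simp add: unitary_mat_def)
qed

lemma unitary_mat_with_first_col:
  assumes v: "v \<in> carrier_vec n" and v1: "vnorm2 v = 1"
  shows "\<exists>W. unitary_mat n W \<and> col W 0 = v"
proof -
  interpret cof_vec_space n "TYPE(complex)" .
  have v0: "v \<noteq> 0\<^sub>v n"
    using v1 vnorm2_eq_0_iff[of "0\<^sub>v n"] by auto
  define b where "b = basis_completion v"
  from basis_completion[OF v v0, folded b_def]
  have dist_b: "distinct b" and indep: "\<not> lin_dep (set b)" and b: "set b \<subseteq> carrier_vec n"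
    and hdb: "hd b = v" and len_b: "length b = n"
    by auto
  have n: "n \<noteq> 0"
    using v0 v by (auto intro!: eq_vecI)
  from hdb len_b n obtain vs where bv: "b = v # vs"
    by (cases b) auto
  define ws where "ws = gram_schmidt n b"
  from gram_schmidt_result[OF b dist_b indep ws_def]
  have ws: "set ws \<subseteq> carrier_vec n" "corthogonal ws" "length ws = n"
    by (auto simp: len_b)
  have "hd ws = v"
    unfolding ws_def bv using gram_schmidt_hd[OF v] by simp
  then have ws0: "ws ! 0 = v"
    using ws(3) n by (cases ws) auto
  have wsc: "j < n \<Longrightarrow> ws ! j \<in> carrier_vec n" for j
    using ws by auto
  have orth: "i < n \<Longrightarrow> j < n \<Longrightarrow> cinner (ws ! i) (ws ! j) = 0 \<longleftrightarrow> i \<noteq> j" for i j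
    using corthogonalD[OF ws(2), of i j] ws(3) cscalar_prod_eq_cinner[of "ws ! i" "ws ! j"] wsc[of i] wsc[of j]
    by auto
  have nz: "j < n \<Longrightarrow> vnorm2 (ws ! j) \<noteq> 0" for j
    using orth[of j j] cinner_self[of "ws ! j"] by auto
  text \<open>Gram--Schmidt only orthogonalises; the columns still have to be normalised.\<close>
  define W where "W = mat n n (\<lambda>(i, j). (ws ! j) $ i / complex_of_real (vnorm2 (ws ! j)))"
  have W: "W \<in> carrier_mat n n"
    by (simp add: W_def)
  have colW: "j < n \<Longrightarrow> col W j = (1 / complex_of_real (vnorm2 (ws ! j))) \<cdot>\<^sub>v ws ! j" for j
    using wsc[of j] by (auto simp: W_def intro!: eq_vecI)
  have "mat_adjoint W * W = 1\<^sub>m n"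
  proof (rule eq_matI)
    fix i j assume "i < dim_row (1\<^sub>m n)" "j < dim_col (1\<^sub>m n)"
    then have ij: "i < n" "j < n"
      by auto
    have "(mat_adjoint W * W) $$ (i, j)
        = cnj (1 / complex_of_real (vnorm2 (ws ! i))) * (1 / complex_of_real (vnorm2 (ws ! j)))
          * cinner (ws ! i) (ws ! j)"
      unfolding index_adjoint_mult_self[OF W ij] colW[OF ij(1)] colW[OF ij(2)]
      using wsc[OF ij(1)] wsc[OF ij(2)]
      by (auto simp: cinner_def sum_distrib_left algebra_simps intro!: sum.cong)
    also have "\<dots> = 1\<^sub>m n $$ (i, j)"
    proof (cases "i = j")
      case True
      then show ?thesis
        using ij nz[OF ij(1)] cinner_self[of "ws ! i"] by (simp add: power2_eq_square)
    next
      case False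
      then show ?thesis
        using orth[OF ij] ij by simp
    qed
    finally show "(mat_adjoint W * W) $$ (i, j) = 1\<^sub>m n $$ (i, j)" .
  qed (use W in auto)
  moreover have "col W 0 = v"
    using colW[of 0] n v1 ws0 by simp
  ultimately show ?thesis
    using W by (auto simp: unitary_mat_def)
qed

definition real_diag_mat :: "nat \<Rightarrow> (nat \<Rightarrow> real) \<Rightarrow> complex mat" where
  "real_diag_mat n l = mat n n (\<lambda>(i, j). if i = j then complex_of_real (l i) else 0)"

lemma real_diag_mat_carrier [simp]: "real_diag_mat n l \<in> carrier_mat n n"
  by (simp add: real_diag_mat_def)

lemma dim_real_diag_mat [simp]: "dim_row (real_diag_mat n l) = n" "dim_col (real_diag_mat n l) = n"
  by (simp_all add: real_diag_mat_def)

lemma index_mult_real_diag_mat: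
  assumes U: "U \<in> carrier_mat n n" and ij: "i < n" "j < n"
  shows "(U * real_diag_mat n l) $$ (i, j) = U $$ (i, j) * complex_of_real (l j)"
proof -
  have "(U * real_diag_mat n l) $$ (i, j) = (\<Sum>k\<in>{j}. U $$ (i, k) * real_diag_mat n l $$ (k, j))"
    unfolding index_mult_mat_sum[OF U real_diag_mat_carrier ij]
    using ij by (intro sum.mono_neutral_right) (auto simp: real_diag_mat_def)
  then show ?thesis
    using ij by (simp add: real_diag_mat_def)
qed

lemma real_diag_mat_mult: "real_diag_mat n l * real_diag_mat n l' = real_diag_mat n (\<lambda>i. l i * l' i)"
proof (rule eq_matI)
  fix i j assume "i < dim_row (real_diag_mat n (\<lambda>i. l i * l' i))" "j < dim_col (real_diag_mat n (\<lambda>i. l i * l' i))"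
  then have ij: "i < n" "j < n"
    by (auto simp: real_diag_mat_def)
  show "(real_diag_mat n l * real_diag_mat n l') $$ (i, j) = real_diag_mat n (\<lambda>i. l i * l' i) $$ (i, j)"
    unfolding index_mult_real_diag_mat[OF real_diag_mat_carrier ij] using ij by (simp add: real_diag_mat_def)
qed (auto simp: real_diag_mat_def)

definition one_block :: "complex mat \<Rightarrow> complex mat" where
  "one_block U = mat (Suc (dim_row U)) (Suc (dim_row U)) (\<lambda>(i, j).
     if i = 0 \<and> j = 0 then 1 else if i = 0 \<or> j = 0 then 0 else U $$ (i - 1, j - 1))"

lemma unitary_mat_one_block:
  assumes U: "unitary_mat m U"
  shows "unitary_mat (Suc m) (one_block U)"
proof -
  have Uc: "U \<in> carrier_mat m m" and UU: "mat_adjoint U * U = 1\<^sub>m m"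
    using U by (auto simp: unitary_mat_def)
  let ?V = "one_block U"
  have V: "?V \<in> carrier_mat (Suc m) (Suc m)"
    using Uc by (simp add: one_block_def)
  have "mat_adjoint ?V * ?V = 1\<^sub>m (Suc m)"
  proof (rule eq_matI)
    fix i j assume "i < dim_row (1\<^sub>m (Suc m))" "j < dim_col (1\<^sub>m (Suc m))"
    then have ij: "i < Suc m" "j < Suc m"
      by auto
    have "(mat_adjoint ?V * ?V) $$ (i, j)
        = cnj (?V $$ (0, i)) * ?V $$ (0, j) + (\<Sum>k<m. cnj (?V $$ (Suc k, i)) * ?V $$ (Suc k, j))"
      unfolding index_mult_mat_sum[OF mat_adjoint_carrier[OF V] V ij] sum.lessThan_Suc_shift
      using ij V by simp
    also have "\<dots> = 1\<^sub>m (Suc m) $$ (i, j)"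
    proof (cases "i = 0 \<or> j = 0")
      case True
      then have "(\<Sum>k<m. cnj (?V $$ (Suc k, i)) * ?V $$ (Suc k, j)) = 0"
        using Uc by (intro sum.neutral) (auto simp: one_block_def)
      then show ?thesis
        using ij Uc True by (auto simp: one_block_def)
    next
      case False
      then obtain i' j' where i'j': "i = Suc i'" "j = Suc j'"
        by (metis not0_implies_Suc)
      have "(\<Sum>k<m. cnj (?V $$ (Suc k, i)) * ?V $$ (Suc k, j)) = (mat_adjoint U * U) $$ (i', j')"
        using index_mult_mat_sum[OF mat_adjoint_carrier[OF Uc] Uc, of i' j'] ij i'j' Uc
        by (simp add: one_block_def)
      then show ?thesis
        using ij i'j' UU Uc by (simp add: one_block_def)
    qed
    finally show "(mat_adjoint ?V * ?V) $$ (i, j) = 1\<^sub>m (Suc m) $$ (i, j)" .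
  qed (use V in auto)
  with V show ?thesis
    by (simp add: unitary_mat_def)
qed

lemma one_block_diagonalizes:
  assumes M: "M \<in> carrier_mat (Suc m) (Suc m)" and U: "U \<in> carrier_mat m m"
    and col0: "\<And>i. i < Suc m \<Longrightarrow> M $$ (i, 0) = (if i = 0 then complex_of_real e else 0)"
    and row0: "\<And>j. j < Suc m \<Longrightarrow> M $$ (0, j) = (if j = 0 then complex_of_real e else 0)"
    and MU: "mat m m (\<lambda>(i, j). M $$ (Suc i, Suc j)) * U = U * real_diag_mat m l"
  shows "M * one_block U = one_block U * real_diag_mat (Suc m) (\<lambda>i. if i = 0 then e else l (i - 1))"
    (is "_ = _ * real_diag_mat _ ?l")
proof -
  let ?V = "one_block U" and ?M3 = "mat m m (\<lambda>(i, j). M $$ (Suc i, Suc j))"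
  have V: "?V \<in> carrier_mat (Suc m) (Suc m)"
    using U by (simp add: one_block_def)
  show ?thesis
  proof (rule eq_matI)
    fix i j assume "i < dim_row (?V * real_diag_mat (Suc m) ?l)" "j < dim_col (?V * real_diag_mat (Suc m) ?l)"
    then have ij: "i < Suc m" "j < Suc m"
      using V by (auto simp: real_diag_mat_def)
    have "(M * ?V) $$ (i, j) = M $$ (i, 0) * ?V $$ (0, j) + (\<Sum>k<m. M $$ (i, Suc k) * ?V $$ (Suc k, j))"
      unfolding index_mult_mat_sum[OF M V ij] sum.lessThan_Suc_shift ..
    also have "\<dots> = (?V * real_diag_mat (Suc m) ?l) $$ (i, j)"
    proof (cases "i = 0 \<or> j = 0")
      case True
      then have "(\<Sum>k<m. M $$ (i, Suc k) * ?V $$ (Suc k, j)) = 0"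
        using row0 U by (intro sum.neutral) (auto simp: one_block_def)
      then show ?thesis
        unfolding index_mult_real_diag_mat[OF V ij] using True ij col0 U
        by (auto simp: one_block_def)
    next
      case False
      then obtain i' j' where i'j': "i = Suc i'" "j = Suc j'"
        by (metis not0_implies_Suc)
      have "(\<Sum>k<m. M $$ (i, Suc k) * ?V $$ (Suc k, j)) = (?M3 * U) $$ (i', j')"
        using index_mult_mat_sum[of ?M3 m m U m i' j'] ij i'j' U by (simp add: one_block_def)
      also have "\<dots> = U $$ (i', j') * complex_of_real (l j')"
        unfolding MU using index_mult_real_diag_mat[OF U, of i' j'] ij i'j' by simp
      finally show ?thesis
        unfolding index_mult_real_diag_mat[OF V ij] using ij i'j' col0 U by (simp add: one_block_def)
    qed
    finally show "(M * ?V) $$ (i, j) = (?V * real_diag_mat (Suc m) ?l) $$ (i, j)" .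
  qed (use M V in \<open>auto simp: real_diag_mat_def\<close>)
qed

lemma hermitian_unitary_diagonalization:
  assumes "M \<in> carrier_mat n n" "mat_adjoint M = M"
  shows "\<exists>U l. unitary_mat n U \<and> M * U = U * real_diag_mat n l"
  using assms
proof (induct n arbitrary: M)
  case 0
  then show ?case
    by (intro exI[of _ "1\<^sub>m 0"] exI[of _ "\<lambda>_. 0"]) (auto simp: unitary_mat_def intro!: eq_matI)
next
  case (Suc m M)
  have M: "M \<in> carrier_mat (Suc m) (Suc m)" and hM: "mat_adjoint M = M"
    using Suc by auto
  obtain e v0 where "eigenvector M v0 e"
    using spectrum_non_empty[OF M] by (auto simp: spectrum_def eigenvalue_def)
  then have v0: "v0 \<in> carrier_vec (Suc m)" "v0 \<noteq> 0\<^sub>v (Suc m)" "M *\<^sub>v v0 = e \<cdot>\<^sub>v v0"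
    using M by (auto simp: eigenvector_def)
  define v where "v = (1 / complex_of_real (vnorm2 v0)) \<cdot>\<^sub>v v0"
  have nv0: "vnorm2 v0 > 0"
    using v0 vnorm2_pos_iff by auto
  have v: "v \<in> carrier_vec (Suc m)" "vnorm2 v = 1" "M *\<^sub>v v = e \<cdot>\<^sub>v v"
    using v0 M nv0 by (auto simp: v_def vnorm2_smult norm_divide mult_mat_vec smult_smult_assoc mult.commute)
  obtain W where W: "unitary_mat (Suc m) W" and Wv: "col W 0 = v"
    using unitary_mat_with_first_col[OF v(1,2)] by blast
  have Wc: "W \<in> carrier_mat (Suc m) (Suc m)" and WW: "mat_adjoint W * W = 1\<^sub>m (Suc m)"
    using W by (auto simp: unitary_mat_def)
  define M' where "M' = mat_adjoint W * M * W"
  have M': "M' \<in> carrier_mat (Suc m) (Suc m)"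
    unfolding M'_def using mat_adjoint_carrier[OF Wc] M Wc by (metis mult_carrier_mat)
  have hM': "mat_adjoint M' = M'"
    unfolding M'_def using Wc M
    by (simp add: mat_adjoint_mult[of _ "Suc m" "Suc m" _ "Suc m"] hM assoc_mult_mat[of _ "Suc m" "Suc m" _ "Suc m" _ "Suc m"])
  have aW: "mat_adjoint W \<in> carrier_mat (Suc m) (Suc m)"
    using Wc by simp
  have "col M' 0 = (mat_adjoint W * M) *\<^sub>v col W 0"
    unfolding M'_def by (rule col_mult2[OF mult_carrier_mat[OF aW M] Wc]) simp
  also have "\<dots> = e \<cdot>\<^sub>v (mat_adjoint W *\<^sub>v col W 0)"
    unfolding Wv using aW M v by (simp add: mult_mat_vec)
  also have "mat_adjoint W *\<^sub>v col W 0 = unit_vec (Suc m) 0"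
    using col_mult2[OF aW Wc, of 0] by (simp add: WW)
  finally have colM': "col M' 0 = e \<cdot>\<^sub>v unit_vec (Suc m) 0" .
  have col0: "M' $$ (i, 0) = (if i = 0 then e else 0)" if "i < Suc m" for i
    using arg_cong[OF colM', of "\<lambda>x. x $ i"] that M' by (auto simp: unit_vec_def)
  have row0: "M' $$ (0, j) = cnj (M' $$ (j, 0))" if "j < Suc m" for j
    using arg_cong[OF hM', of "\<lambda>N. N $$ (0, j)"] that M' by simp
  have e_cnj: "cnj e = e"
    using row0[of 0] col0[of 0] by simp
  then have e_real: "complex_of_real (Re e) = e"
    by (simp add: complex_eq_iff)
  define M3 where "M3 = mat m m (\<lambda>(i, j). M' $$ (Suc i, Suc j))"
  have M3: "M3 \<in> carrier_mat m m"
    by (simp add: M3_def)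
  have "mat_adjoint M3 = M3"
  proof (rule eq_matI)
    fix i j assume "i < dim_row M3" "j < dim_col M3"
    then show "mat_adjoint M3 $$ (i, j) = M3 $$ (i, j)"
      using arg_cong[OF hM', of "\<lambda>N. N $$ (Suc i, Suc j)"] M' M3 by (simp add: M3_def)
  qed (use M3 in auto)
  from Suc(1)[OF M3 this] obtain U3 l3 where U3: "unitary_mat m U3" and MU3: "M3 * U3 = U3 * real_diag_mat m l3"
    by blast
  have U3c: "U3 \<in> carrier_mat m m"
    using U3 by (simp add: unitary_mat_def)
  have M'V: "M' * one_block U3 = one_block U3 * real_diag_mat (Suc m) (\<lambda>i. if i = 0 then Re e else l3 (i - 1))"
    using col0 row0 e_cnj e_real by (intro one_block_diagonalizes[OF M' U3c _ _ MU3[unfolded M3_def]]) auto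
  have MW: "M * W = W * M'"
  proof -
    have "W * M' = (W * mat_adjoint W) * (M * W)"
      unfolding M'_def using Wc M aW by (simp add: assoc_mult_mat[of _ "Suc m" "Suc m" _ "Suc m" _ "Suc m"])
    then show ?thesis
      using unitary_mat_right_inverse[OF W] M Wc by simp
  qed
  have Vc: "one_block U3 \<in> carrier_mat (Suc m) (Suc m)"
    using unitary_mat_one_block[OF U3] by (simp add: unitary_mat_def)
  have "M * (W * one_block U3) = (W * M') * one_block U3"
    using assoc_mult_mat[OF M Wc Vc] by (simp add: MW)
  also have "\<dots> = W * (M' * one_block U3)"
    by (rule assoc_mult_mat[OF Wc M' Vc])
  also have "\<dots> = (W * one_block U3) * real_diag_mat (Suc m) (\<lambda>i. if i = 0 then Re e else l3 (i - 1))"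
    unfolding M'V by (rule assoc_mult_mat[symmetric, OF Wc Vc real_diag_mat_carrier])
  finally show ?case
    using unitary_mat_mult[OF W unitary_mat_one_block[OF U3]] by blast
qed

lemma char_poly_unitary_diagonal:
  assumes M: "M \<in> carrier_mat n n" and U: "unitary_mat n U" and MU: "M * U = U * real_diag_mat n l"
  shows "char_poly M = (\<Prod>a\<leftarrow>map (\<lambda>i. complex_of_real (l i)) [0..<n]. [:- a, 1:])"
proof -
  have Uc: "U \<in> carrier_mat n n" and aU: "mat_adjoint U \<in> carrier_mat n n"
    using U by (auto simp: unitary_mat_def)
  have "M = (M * U) * mat_adjoint U"
    using assoc_mult_mat[OF M Uc aU] unitary_mat_right_inverse[OF U] M by simp
  then have "similar_mat_wit M (real_diag_mat n l) U (mat_adjoint U)"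
    unfolding similar_mat_wit_def MU using M Uc aU U unitary_mat_right_inverse[OF U]
    by (auto simp: Let_def unitary_mat_def)
  then have "char_poly M = char_poly (real_diag_mat n l)"
    by (intro char_poly_similar) (auto simp: similar_mat_def)
  also have "\<dots> = (\<Prod>a\<leftarrow>diag_mat (real_diag_mat n l). [:- a, 1:])"
    by (rule char_poly_upper_triangular[OF real_diag_mat_carrier]) (auto simp: upper_triangular_def real_diag_mat_def)
  also have "diag_mat (real_diag_mat n l) = map (\<lambda>i. complex_of_real (l i)) [0..<n]"
    by (auto simp: diag_mat_def real_diag_mat_def)
  finally show ?thesis .
qed

lemma mset_eq_if_linear_factors_eq:
  fixes xs ys :: "complex list"
  assumes "(\<Prod>a\<leftarrow>xs. [:- a, 1:]) = (\<Prod>a\<leftarrow>ys. [:- a, 1:])"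
  shows "mset xs = mset ys"
  using assms
proof (induct xs arbitrary: ys)
  case Nil
  then show ?case
    by (cases ys) (auto dest: arg_cong[of _ _ "\<lambda>p. poly p (hd ys)"])
next
  case (Cons x xs)
  have "poly (\<Prod>a\<leftarrow>ys. [:- a, 1:]) x = 0"
    unfolding Cons(2)[symmetric] by simp
  then have "x \<in> set ys"
    by (induct ys) auto
  then obtain ys1 ys2 where ys: "ys = ys1 @ x # ys2"
    by (meson split_list)
  have "(\<Prod>a\<leftarrow>ys. [:- a, 1:]) = [:- x, 1:] * (\<Prod>a\<leftarrow>ys1 @ ys2. [:- a, 1:])"
    unfolding ys by (simp only: map_append prod_list.append list.map prod_list.Cons mult.left_commute)
  then have "[:- x, 1:] * (\<Prod>a\<leftarrow>xs. [:- a, 1:]) = [:- x, 1:] * (\<Prod>a\<leftarrow>ys1 @ ys2. [:- a, 1:])"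
    using Cons(2) by simp
  then have "(\<Prod>a\<leftarrow>xs. [:- a, 1:]) = (\<Prod>a\<leftarrow>ys1 @ ys2. [:- a, 1:])"
    by (metis mult_left_cancel pCons_eq_0_iff zero_neq_one)
  from Cons(1)[OF this] show ?case
    unfolding ys by simp
qed

lemma unitary_diagonal_permutes:
  assumes M: "M \<in> carrier_mat n n" and U: "unitary_mat n U" and MU: "M * U = U * real_diag_mat n l"
    and cp: "char_poly M = (\<Prod>w\<leftarrow>ws. [:- complex_of_real w, 1:])" and len: "length ws = n"
  shows "\<exists>p. p permutes {..<n} \<and> (\<forall>i<n. ws ! i = l (p i))"
proof -
  have "(\<Prod>a\<leftarrow>map complex_of_real ws. [:- a, 1:]) = (\<Prod>a\<leftarrow>map (\<lambda>i. complex_of_real (l i)) [0..<n]. [:- a, 1:])"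
    using cp char_poly_unitary_diagonal[OF M U MU] by (simp add: o_def)
  from arg_cong[OF mset_eq_if_linear_factors_eq[OF this], of "image_mset Re"]
  have "mset ws = mset (map l [0..<n])"
    by (simp add: multiset.map_comp o_def)
  from mset_eq_permutation[OF this] obtain p where p': "p permutes {..<length (map l [0..<n])}"
    and pl: "permute_list p (map l [0..<n]) = ws"
    by auto
  then have p: "p permutes {..<n}"
    by simp
  have "ws ! i = l (p i)" if "i < n" for i
    using permutes_in_image[OF p] permute_list_nth[OF p'] that unfolding pl[symmetric] by simp
  with p show ?thesis
    by blast
qed

definition orthonormal_eigenbasis :: "complex mat \<Rightarrow> (nat \<Rightarrow> real) \<Rightarrow> (nat \<Rightarrow> complex vec) \<Rightarrow> bool" where
  "orthonormal_eigenbasis M c u \<longleftrightarrow> orthonormal (dim_row M) {..<dim_row M} u \<and>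
     (\<forall>j<dim_row M. M *\<^sub>v u j = complex_of_real (c j) \<cdot>\<^sub>v u j)"

lemma unitary_diagonal_eigenbasis:
  assumes M: "M \<in> carrier_mat n n" and U: "unitary_mat n U" and MU: "M * U = U * real_diag_mat n l"
    and p: "p permutes {..<n}"
  shows "orthonormal_eigenbasis M (l \<circ> p) (\<lambda>j. col U (p j))"
proof -
  have Uc: "U \<in> carrier_mat n n" and UU: "mat_adjoint U * U = 1\<^sub>m n"
    using U by (auto simp: unitary_mat_def)
  have pin: "j < n \<Longrightarrow> p j < n" for j
    using permutes_in_image[OF p] by simp
  have inj: "i < n \<Longrightarrow> j < n \<Longrightarrow> p i = p j \<longleftrightarrow> i = j" for i j
    using permutes_inj[OF p] by (auto dest: injD)
  have "orthonormal n {..<n} (\<lambda>j. col U (p j))"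
    unfolding orthonormal_def
    using Uc pin inj index_adjoint_mult_self[OF Uc pin pin] by (auto simp: UU)
  moreover have "M *\<^sub>v col U (p j) = complex_of_real (l (p j)) \<cdot>\<^sub>v col U (p j)" if j: "j < n" for j
  proof -
    have "M *\<^sub>v col U (p j) = col (U * real_diag_mat n l) (p j)"
      using col_mult2[OF M Uc pin[OF j]] by (simp add: MU)
    also have "\<dots> = complex_of_real (l (p j)) \<cdot>\<^sub>v col U (p j)"
    proof (rule eq_vecI)
      fix i assume "i < dim_vec (complex_of_real (l (p j)) \<cdot>\<^sub>v col U (p j))"
      then have i: "i < n"
        using Uc by simp
      have "col (U * real_diag_mat n l) (p j) $ i = (U * real_diag_mat n l) $$ (i, p j)"
        using Uc i pin[OF j] by (intro index_col) auto
      then show "col (U * real_diag_mat n l) (p j) $ i = (complex_of_real (l (p j)) \<cdot>\<^sub>v col U (p j)) $ i"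
        using index_mult_real_diag_mat[OF Uc i pin[OF j]] Uc i pin[OF j] by (simp add: mult.commute)
    qed (use Uc in auto)
    finally show ?thesis .
  qed
  ultimately show ?thesis
    using M by (simp add: orthonormal_eigenbasis_def)
qed

lemma hermitian_sorted_eigenbasis:
  assumes M: "M \<in> carrier_mat n n" and "mat_adjoint M = M" and ev: "sorted_real_eigenvalues M ws"
  shows "\<exists>u. orthonormal_eigenbasis M (nth ws) u"
proof -
  obtain U l where U: "unitary_mat n U" and MU: "M * U = U * real_diag_mat n l"
    using hermitian_unitary_diagonalization[OF assms(1,2)] by blast
  obtain p where p: "p permutes {..<n}" and ws: "\<forall>i<n. ws ! i = l (p i)"
    using unitary_diagonal_permutes[OF M U MU] ev M by (auto simp: sorted_real_eigenvalues_def)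
  have "orthonormal_eigenbasis M (nth ws) (\<lambda>j. col U (p j))"
    using unitary_diagonal_eigenbasis[OF M U MU p] ws M by (simp add: orthonormal_eigenbasis_def)
  then show ?thesis
    by blast
qed

definition psd_mat :: "complex mat \<Rightarrow> bool" where
  "psd_mat X \<longleftrightarrow> mat_adjoint X = X \<and> (\<forall>v\<in>carrier_vec (dim_row X). Re (cinner v (X *\<^sub>v v)) \<ge> 0)"

text \<open>A unitary diagonalisation of \<open>X\<close> also diagonalises \<open>X\<^sup>* X = X\<^sup>2\<close>; the square roots can be
  matched because both lists are nonnegative.\<close>

lemma psd_singular_value_eigenbasis:
  assumes X: "X \<in> carrier_mat n n" and psd: "psd_mat X" and sv: "singular_values X s"
  shows "\<exists>u. orthonormal_eigenbasis X (nth s) u"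
proof -
  have hX: "mat_adjoint X = X"
    using psd by (simp add: psd_mat_def)
  obtain U l where U: "unitary_mat n U" and XU: "X * U = U * real_diag_mat n l"
    using hermitian_unitary_diagonalization[OF X hX] by blast
  have Uc: "U \<in> carrier_mat n n"
    using U by (simp add: unitary_mat_def)
  have "X * X * U = X * (U * real_diag_mat n l)"
    using assoc_mult_mat[OF X X Uc] by (simp add: XU)
  also have "\<dots> = U * (real_diag_mat n l * real_diag_mat n l)"
    using assoc_mult_mat[OF X Uc real_diag_mat_carrier] assoc_mult_mat[OF Uc real_diag_mat_carrier real_diag_mat_carrier]
    by (simp add: XU)
  finally have XXU: "(X * X) * U = U * real_diag_mat n (\<lambda>i. (l i)\<^sup>2)"
    by (simp add: real_diag_mat_mult power2_eq_square)
  have cp: "char_poly (X * X) = (\<Prod>w\<leftarrow>map (\<lambda>s. s\<^sup>2) s. [:- complex_of_real w, 1:])"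
    and len: "length s = n" and s0: "\<forall>x\<in>set s. x \<ge> 0"
    using sv X hX by (auto simp: singular_values_def sorted_real_eigenvalues_def)
  obtain p where p: "p permutes {..<n}" and sq: "\<forall>i<n. (s ! i)\<^sup>2 = (l (p i))\<^sup>2"
    using unitary_diagonal_permutes[OF _ U XXU cp] X len by auto
  have basis: "orthonormal_eigenbasis X (l \<circ> p) (\<lambda>j. col U (p j))"
    by (rule unitary_diagonal_eigenbasis[OF X U XU p])
  have "s ! j = l (p j)" if j: "j < n" for j
  proof -
    have c: "col U (p j) \<in> carrier_vec n" and "cinner (col U (p j)) (col U (p j)) = 1"
      using basis j X by (auto simp: orthonormal_eigenbasis_def orthonormal_def)
    moreover have "Re (cinner (col U (p j)) (X *\<^sub>v col U (p j))) \<ge> 0"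
      using psd c X by (simp add: psd_mat_def)
    ultimately have "l (p j) \<ge> 0"
      using basis j X by (simp add: orthonormal_eigenbasis_def cinner_smult_right)
    moreover have "s ! j \<ge> 0"
      using s0 len j by auto
    ultimately show ?thesis
      using sq j by (metis power2_eq_iff_nonneg)
  qed
  then have "orthonormal_eigenbasis X (nth s) (\<lambda>j. col U (p j))"
    using basis X by (simp add: orthonormal_eigenbasis_def)
  then show ?thesis
    by blast
qed

lemma sorted_wrt_ge_nth:
  assumes "sorted_wrt (\<ge>) xs" "i \<le> j" "j < length xs"
  shows "xs ! j \<le> (xs ! i :: 'a :: linorder)"
  using assms sorted_wrt_nth_less[of "(\<ge>)" xs i j] by (cases "i = j") auto

lemma singular_values_sorted:
  assumes "singular_values X s"
  shows "sorted_wrt (\<ge>) s"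
proof -
  have sq: "sorted_wrt (\<lambda>x y. y\<^sup>2 \<le> x\<^sup>2) s" and nonneg: "\<forall>x\<in>set s. x \<ge> 0"
    using assms by (auto simp: singular_values_def sorted_real_eigenvalues_def sorted_wrt_map)
  show ?thesis
  proof (rule sorted_wrt_mono_rel[OF _ sq])
    fix x y assume "x \<in> set s" "y\<^sup>2 \<le> x\<^sup>2"
    then show "y \<le> x"
      using nonneg power2_le_imp_le by blast
  qed
qed

section \<open>Solutions of the Lyapunov equation are positive semidefinite\<close>

lemma pow_smult_mat:
  assumes "(M :: complex mat) \<in> carrier_mat n n"
  shows "(a \<cdot>\<^sub>m M) ^\<^sub>m k = a ^ k \<cdot>\<^sub>m (M ^\<^sub>m k)"
proof (induct k)
  case (Suc k)
  have "(a \<cdot>\<^sub>m M) ^\<^sub>m Suc k = a \<cdot>\<^sub>m (a ^ k \<cdot>\<^sub>m (M ^\<^sub>m k * M))"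
    using Suc assms by (simp add: mult_smult_assoc_mat[of _ n n _ n] mult_smult_distrib[of _ n n _ n])
  also have "\<dots> = a ^ Suc k \<cdot>\<^sub>m (M ^\<^sub>m Suc k)"
    by (rule eq_matI) auto
  finally show ?case .
qed (use assms in \<open>auto intro!: eq_matI\<close>)

text \<open>Rescaling by some \<open>r\<close> strictly between the spectral radius and 1 makes the Jordan normal form
  bound for spectral radius below 1 applicable.\<close>

lemma pow_mat_entries_decay:
  fixes C :: "complex mat"
  assumes C: "C \<in> carrier_mat n n" and n: "n > 0" and ev: "\<And>z. eigenvalue C z \<Longrightarrow> cmod z < 1"
  shows "\<exists>c r. 0 < r \<and> r < 1 \<and> (\<forall>k i j. i < n \<longrightarrow> j < n \<longrightarrow> cmod ((C ^\<^sub>m k) $$ (i, j)) \<le> c * r ^ k)"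
proof -
  define \<rho> where "\<rho> = spectral_radius C"
  obtain z where "eigenvalue C z" "\<rho> = cmod z"
    using spectral_radius_mem_max(1)[OF C n] unfolding \<rho>_def spectrum_def by auto
  then have \<rho>: "0 \<le> \<rho>" "\<rho> < 1"
    using ev by auto
  define r where "r = (1 + \<rho>) / 2"
  have r: "0 < r" "r < 1" "\<rho> < r"
    using \<rho> by (auto simp: r_def)
  define C' where "C' = complex_of_real (1 / r) \<cdot>\<^sub>m C"
  have C': "C' \<in> carrier_mat n n"
    using C by (simp add: C'_def)
  have CC': "C = complex_of_real r \<cdot>\<^sub>m C'"
    using r by (auto intro!: eq_matI simp: C'_def of_real_def[symmetric])
  have "cmod z < 1" if ev': "eigenvalue C' z" for z
  proof -
    obtain v where v: "v \<in> carrier_vec n" "v \<noteq> 0\<^sub>v n" "C' *\<^sub>v v = z \<cdot>\<^sub>v v"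
      using ev' C' by (auto simp: eigenvalue_def eigenvector_def)
    have "C *\<^sub>v v = (complex_of_real r * z) \<cdot>\<^sub>v v"
      unfolding CC' smult_mult_mat_vec[OF C' v(1)] v(3) by (simp add: smult_smult_assoc)
    then have "eigenvalue C (complex_of_real r * z)"
      using v C by (auto simp: eigenvalue_def eigenvector_def)
    then have "cmod (complex_of_real r * z) \<le> \<rho>"
      using spectral_radius_mem_max(2)[OF C n] unfolding \<rho>_def spectrum_def by auto
    then have "r * cmod z \<le> \<rho>"
      using r by (simp add: norm_mult)
    then have "r * cmod z < r * 1"
      using r by linarith
    then show "cmod z < 1"
      using r by (simp add: mult_less_cancel_left_pos)
  qed
  then have "spectral_radius C' < 1"
    using spectral_radius_mem_max(1)[OF C' n] unfolding spectrum_def by auto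
  from spectral_radius_jnf_norm_bound_less_1_upper_triangular[OF C' this]
  obtain c where c: "\<And>k. norm_bound (C' ^\<^sub>m k) c"
    by auto
  have "cmod ((C ^\<^sub>m k) $$ (i, j)) \<le> c * r ^ k" if ij: "i < n" "j < n" for k i j
  proof -
    have "(C ^\<^sub>m k) $$ (i, j) = complex_of_real (r ^ k) * (C' ^\<^sub>m k) $$ (i, j)"
      unfolding CC' pow_smult_mat[OF C'] using ij C' by simp
    moreover have "cmod ((C' ^\<^sub>m k) $$ (i, j)) \<le> c"
      using c[of k] ij C' by (simp add: norm_bound_def)
    moreover have "cmod (complex_of_real r ^ k) = r ^ k"
      using r by (simp add: norm_power)
    ultimately show ?thesis
      using r by (simp add: norm_mult mult.commute mult_left_mono)
  qed
  with r show ?thesis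
    by blast
qed

lemma vnorm2_adjoint_pow_mat_decay:
  assumes C: "C \<in> carrier_mat n n" and x: "x \<in> carrier_vec n"
    and decay: "\<And>k i j. i < n \<Longrightarrow> j < n \<Longrightarrow> cmod ((C ^\<^sub>m k) $$ (i, j)) \<le> c * r ^ k"
  shows "vnorm2 (mat_adjoint (C ^\<^sub>m k) *\<^sub>v x) \<le> real n * real n * c * r ^ k * vnorm2 x"
proof -
  have "vnorm2 (mat_adjoint (C ^\<^sub>m k) *\<^sub>v x) \<le> entrywise_norm (C ^\<^sub>m k) * vnorm2 x"
    using C x vnorm2_mult_mat_vec_le_entrywise[of "mat_adjoint (C ^\<^sub>m k)" n n x]
    by (simp add: entrywise_norm_adjoint)
  also have "\<dots> \<le> real n * real n * (c * r ^ k) * vnorm2 x"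
    using C decay by (intro mult_right_mono entrywise_norm_le vnorm2_nonneg) auto
  finally show ?thesis
    by (simp add: mult.assoc)
qed

lemma cmod_cinner_mult_le_entrywise:
  assumes "X \<in> carrier_mat n n" "x \<in> carrier_vec n" "y \<in> carrier_vec n"
  shows "cmod (cinner x (X *\<^sub>v y)) \<le> entrywise_norm X * vnorm2 x * vnorm2 y"
proof -
  have "cmod (cinner x (X *\<^sub>v y)) \<le> vnorm2 x * vnorm2 (X *\<^sub>v y)"
    using assms by (intro cmod_cinner_le) simp
  also have "\<dots> \<le> vnorm2 x * (entrywise_norm X * vnorm2 y)"
    using assms by (intro mult_left_mono vnorm2_mult_mat_vec_le_entrywise vnorm2_nonneg)
  finally show ?thesis
    by (simp add: ac_simps)
qed

lemma le_0_if_le_geometric_square: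
  fixes t K r :: real
  assumes r: "0 < r" "r < 1" and le: "\<And>k. t \<le> K * (r ^ k)\<^sup>2"
  shows "t \<le> 0"
proof -
  have "(\<lambda>k. r ^ k) \<longlonglongrightarrow> 0"
    using r by (intro LIMSEQ_power_zero) simp
  then have "(\<lambda>k. K * (r ^ k)\<^sup>2) \<longlonglongrightarrow> K * 0\<^sup>2"
    by (intro tendsto_mult_left tendsto_power)
  then show ?thesis
    using le by (intro LIMSEQ_le_const) auto
qed

lemma cinner_diff_diff:
  assumes "a \<in> carrier_vec n" "b \<in> carrier_vec n" "u \<in> carrier_vec n" "w \<in> carrier_vec n"
  shows "cinner (a - b) (u - w) = cinner (a + b) (u + w) - 2 * (cinner a w + cinner b u)"
proof -
  have "cinner (a - b) (u - w)
      = (\<Sum>i<n. cnj (a $ i + b $ i) * (u $ i + w $ i) - 2 * (cnj (a $ i) * w $ i + cnj (b $ i) * u $ i))"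
    unfolding cinner_def using assms by (auto intro!: sum.cong simp: algebra_simps)
  also have "\<dots> = cinner (a + b) (u + w) - 2 * (cinner a w + cinner b u)"
    unfolding cinner_def using assms by (simp add: sum_subtractf sum_distrib_left sum.distrib)
  finally show ?thesis .
qed

locale stein_equation =
  fixes n :: nat and X C P R :: "complex mat" and c r :: real
  assumes X: "X \<in> carrier_mat n n" and C: "C \<in> carrier_mat n n" and P: "P \<in> carrier_mat n n"
    and R: "R \<in> carrier_mat n n" "psd_mat R"
    and r: "0 < r" "r < 1"
    and decay: "\<And>k i j. i < n \<Longrightarrow> j < n \<Longrightarrow> cmod ((C ^\<^sub>m k) $$ (i, j)) \<le> c * r ^ k"
    and stein: "\<And>x y. x \<in> carrier_vec n \<Longrightarrow> y \<in> carrier_vec n \<Longrightarrow>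
      cinner x (X *\<^sub>v y) = cinner (mat_adjoint C *\<^sub>v x) (X *\<^sub>v (mat_adjoint C *\<^sub>v y))
        + 2 * cinner (P *\<^sub>v x) (R *\<^sub>v (P *\<^sub>v y))"
begin

abbreviation iter :: "nat \<Rightarrow> complex vec \<Rightarrow> complex vec" where
  "iter k x \<equiv> mat_adjoint (C ^\<^sub>m k) *\<^sub>v x"

lemma iter_carrier: "x \<in> carrier_vec n \<Longrightarrow> iter k x \<in> carrier_vec n"
  using C by (intro mult_mat_vec_carrier) auto

lemma iter_Suc: "x \<in> carrier_vec n \<Longrightarrow> iter (Suc k) x = mat_adjoint C *\<^sub>v iter k x"
  using C mat_adjoint_mult[of "C ^\<^sub>m k" n n C n]
  by (simp add: assoc_mult_mat_vec[of _ n n _ n])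

lemma vnorm2_iter_le: "x \<in> carrier_vec n \<Longrightarrow> vnorm2 (iter k x) \<le> real n * real n * c * r ^ k * vnorm2 x"
  using vnorm2_adjoint_pow_mat_decay[OF C _ decay] by blast

lemma cinner_iter_le:
  assumes "x \<in> carrier_vec n" "y \<in> carrier_vec n"
  shows "cmod (cinner (iter k x) (X *\<^sub>v iter k y))
    \<le> entrywise_norm X * (real n * real n * c) ^ 2 * vnorm2 x * vnorm2 y * (r ^ k)\<^sup>2"
proof -
  have "cmod (cinner (iter k x) (X *\<^sub>v iter k y)) \<le> entrywise_norm X * (vnorm2 (iter k x) * vnorm2 (iter k y))"
    using cmod_cinner_mult_le_entrywise[OF X iter_carrier iter_carrier] assms by (simp add: mult.assoc)
  also have "\<dots> \<le> entrywise_norm X * ((real n * real n * c * r ^ k * vnorm2 x) * (real n * real n * c * r ^ k * vnorm2 y))"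
    using assms vnorm2_iter_le vnorm2_nonneg entrywise_norm_nonneg
    by (intro mult_left_mono mult_mono) (auto intro: order_trans[OF vnorm2_nonneg])
  finally show ?thesis
    by (simp add: power2_eq_square algebra_simps)
qed

lemma R_form_hermitian:
  assumes "x \<in> carrier_vec n" "y \<in> carrier_vec n"
  shows "cnj (cinner (P *\<^sub>v y) (R *\<^sub>v (P *\<^sub>v x))) = cinner (P *\<^sub>v x) (R *\<^sub>v (P *\<^sub>v y))"
proof -
  have "cinner (P *\<^sub>v y) (R *\<^sub>v (P *\<^sub>v x)) = cinner (R *\<^sub>v (P *\<^sub>v y)) (P *\<^sub>v x)"
    using cinner_mult_mat_vec[OF R(1), of "P *\<^sub>v y" "P *\<^sub>v x"] R(2) P assms by (simp add: psd_mat_def)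
  also have "\<dots> = cnj (cinner (P *\<^sub>v x) (R *\<^sub>v (P *\<^sub>v y)))"
    using R(1) P assms by (intro cinner_commute) simp
  finally show ?thesis
    by simp
qed

text \<open>The anti-Hermitian part of the form \<open>\<langle>x, X y\<rangle>\<close> is invariant under the iteration, which
  contracts to zero; hence it vanishes.\<close>

lemma antihermitian_part_invariant:
  assumes "x \<in> carrier_vec n" "y \<in> carrier_vec n"
  shows "cinner x (X *\<^sub>v y) - cnj (cinner y (X *\<^sub>v x))
       = cinner (iter k x) (X *\<^sub>v iter k y) - cnj (cinner (iter k y) (X *\<^sub>v iter k x))"
proof (induct k)
  case 0
  then show ?case
    using C assms by simp
next
  case (Suc k)
  let ?x = "iter k x" and ?y = "iter k y"
  have x: "?x \<in> carrier_vec n" and y: "?y \<in> carrier_vec n"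
    using assms by (simp_all add: iter_carrier)
  have "cinner ?x (X *\<^sub>v ?y) - cnj (cinner ?y (X *\<^sub>v ?x))
      = cinner (mat_adjoint C *\<^sub>v ?x) (X *\<^sub>v (mat_adjoint C *\<^sub>v ?y))
        - cnj (cinner (mat_adjoint C *\<^sub>v ?y) (X *\<^sub>v (mat_adjoint C *\<^sub>v ?x)))"
    using stein[OF x y] stein[OF y x] R_form_hermitian[OF x y] by simp
  with Suc show ?case
    unfolding iter_Suc[OF assms(1)] iter_Suc[OF assms(2)] by simp
qed

lemma quadratic_form_iter_le:
  assumes "x \<in> carrier_vec n"
  shows "Re (cinner (iter k x) (X *\<^sub>v iter k x)) \<le> Re (cinner x (X *\<^sub>v x))"
proof (induct k)
  case 0
  then show ?case
    using C assms by simp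
next
  case (Suc k)
  have x: "iter k x \<in> carrier_vec n"
    using assms by (rule iter_carrier)
  have "Re (cinner (P *\<^sub>v iter k x) (R *\<^sub>v (P *\<^sub>v iter k x))) \<ge> 0"
    using R P x by (simp add: psd_mat_def)
  then show ?case
    unfolding iter_Suc[OF assms] using Suc stein[OF x x] by simp
qed

lemma X_psd: "psd_mat X"
proof -
  define K where "K x y = entrywise_norm X * (real n * real n * c) ^ 2 * vnorm2 x * vnorm2 y" for x y
  have bound: "cmod (cinner (iter k x) (X *\<^sub>v iter k y)) \<le> K x y * (r ^ k)\<^sup>2"
    if "x \<in> carrier_vec n" "y \<in> carrier_vec n" for k x y
    using cinner_iter_le[OF that] by (simp add: K_def)
  have "mat_adjoint X $$ (i, j) = X $$ (i, j)" if ij: "i < n" "j < n" for i j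
  proof -
    let ?x = "unit_vec n i" and ?y = "unit_vec n j"
    have xy: "?x \<in> carrier_vec n" "?y \<in> carrier_vec n"
      by simp_all
    have "cmod (cinner ?x (X *\<^sub>v ?y) - cnj (cinner ?y (X *\<^sub>v ?x))) \<le> 0"
    proof (rule le_0_if_le_geometric_square[OF r])
      fix k
      have "cmod (cinner ?x (X *\<^sub>v ?y) - cnj (cinner ?y (X *\<^sub>v ?x)))
          \<le> cmod (cinner (iter k ?x) (X *\<^sub>v iter k ?y)) + cmod (cinner (iter k ?y) (X *\<^sub>v iter k ?x))"
        unfolding antihermitian_part_invariant[OF xy, of k]
        using norm_triangle_ineq4[of "cinner (iter k ?x) (X *\<^sub>v iter k ?y)"
            "cnj (cinner (iter k ?y) (X *\<^sub>v iter k ?x))"] by simp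
      also have "\<dots> \<le> K ?x ?y * (r ^ k)\<^sup>2 + K ?y ?x * (r ^ k)\<^sup>2"
        using xy by (intro add_mono bound)
      finally show "cmod (cinner ?x (X *\<^sub>v ?y) - cnj (cinner ?y (X *\<^sub>v ?x))) \<le> (K ?x ?y + K ?y ?x) * (r ^ k)\<^sup>2"
        by (simp add: distrib_right)
    qed
    then show ?thesis
      using cinner_unit_vec_mult[OF X ij] cinner_unit_vec_mult[OF X ij(2,1)] X ij by simp
  qed
  then have "mat_adjoint X = X"
    using X by (intro eq_matI) simp_all
  moreover have "Re (cinner v (X *\<^sub>v v)) \<ge> 0" if v: "v \<in> carrier_vec n" for v
  proof -
    have "- Re (cinner v (X *\<^sub>v v)) \<le> 0"
    proof (rule le_0_if_le_geometric_square[OF r])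
      fix k
      have "- Re (cinner v (X *\<^sub>v v)) \<le> cmod (cinner (iter k v) (X *\<^sub>v iter k v))"
        using quadratic_form_iter_le[OF v, of k] abs_Re_le_cmod[of "cinner (iter k v) (X *\<^sub>v iter k v)"]
        by linarith
      also have "\<dots> \<le> K v v * (r ^ k)\<^sup>2"
        using bound[OF v v] .
      finally show "- Re (cinner v (X *\<^sub>v v)) \<le> K v v * (r ^ k)\<^sup>2" .
    qed
    then show ?thesis
      by simp
  qed
  ultimately show ?thesis
    using X by (simp add: psd_mat_def)
qed

end

lemma cmod_lt_1_if_cayley_Re_neg:
  fixes z :: complex
  assumes z: "z \<noteq> - 1" and re: "Re ((z - 1) / (z + 1)) < 0"
  shows "cmod z < 1"
proof -
  have "z + 1 \<noteq> 0"
    using z by (metis add.inverse_unique add.commute)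
  then have d: "(Re (z + 1))\<^sup>2 + (Im (z + 1))\<^sup>2 > 0"
    by (simp add: complex_eq_iff sum_power2_gt_zero_iff)
  have "Re ((z - 1) / (z + 1)) = ((Re z)\<^sup>2 + (Im z)\<^sup>2 - 1) / ((Re (z + 1))\<^sup>2 + (Im (z + 1))\<^sup>2)"
    unfolding Re_divide by (simp add: power2_eq_square algebra_simps)
  with re d have "(cmod z)\<^sup>2 < 1"
    by (simp add: divide_less_0_iff cmod_power2)
  then show ?thesis
    by (simp add: power_less_one_iff abs_square_less_1)
qed

text \<open>The Cayley transform \<open>(I - A)\<^sup>-\<^sup>1 (I + A)\<close> maps the eigenvalues \<open>w\<close> of \<open>A\<close> to
  \<open>(1 + w) / (1 - w)\<close>, hence the open left half-plane into the open unit disc.\<close>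

lemma cayley_transform_eigenvalue:
  assumes A: "A \<in> carrier_mat n n" and stab: "stable_mat A" and Q: "Q \<in> carrier_mat n n"
    and NQ: "(1\<^sub>m n - A) * Q = 1\<^sub>m n" and ev: "eigenvalue (Q * (1\<^sub>m n + A)) z"
  shows "cmod z < 1"
proof -
  obtain v where v: "v \<in> carrier_vec n" "v \<noteq> 0\<^sub>v n" "(Q * (1\<^sub>m n + A)) *\<^sub>v v = z \<cdot>\<^sub>v v"
    using ev A Q by (auto simp: eigenvalue_def eigenvector_def)
  have N: "1\<^sub>m n - A \<in> carrier_mat n n"
    using A by (rule minus_carrier_mat)
  have w: "(1\<^sub>m n + A) *\<^sub>v v \<in> carrier_vec n"
    using A v(1) by (intro mult_mat_vec_carrier[of _ n n]) auto
  have "(1\<^sub>m n - A) *\<^sub>v ((Q * (1\<^sub>m n + A)) *\<^sub>v v) = ((1\<^sub>m n - A) * Q) *\<^sub>v ((1\<^sub>m n + A) *\<^sub>v v)"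
    using assoc_mult_mat_vec[OF Q _ v(1), of "1\<^sub>m n + A"] assoc_mult_mat_vec[OF N Q w] A by simp
  also have "\<dots> = (1\<^sub>m n + A) *\<^sub>v v"
    using NQ w by simp
  finally have "(1\<^sub>m n - A) *\<^sub>v ((Q * (1\<^sub>m n + A)) *\<^sub>v v) = (1\<^sub>m n + A) *\<^sub>v v" .
  then have eq: "z \<cdot>\<^sub>v v - z \<cdot>\<^sub>v (A *\<^sub>v v) = v + A *\<^sub>v v"
    using A v by (simp add: v(3) mult_mat_vec add_mult_distrib_mat_vec[of _ n n] minus_mult_distrib_mat_vec[of _ n n])
  have comp: "v $ i + (A *\<^sub>v v) $ i = z * (v $ i - (A *\<^sub>v v) $ i)" if "i < n" for i
    using arg_cong[OF eq, of "\<lambda>x. x $ i"] A v that by (simp add: algebra_simps)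
  have z: "z \<noteq> - 1"
  proof
    assume "z = - 1"
    then have "v = 0\<^sub>v n"
      using comp v(1) by (intro eq_vecI) (auto simp: algebra_simps)
    with v(2) show False ..
  qed
  then have z1: "z + 1 \<noteq> 0"
    by (metis add.inverse_unique add.commute)
  have "A *\<^sub>v v = ((z - 1) / (z + 1)) \<cdot>\<^sub>v v"
  proof (rule eq_vecI)
    fix i assume "i < dim_vec (((z - 1) / (z + 1)) \<cdot>\<^sub>v v)"
    then have i: "i < n"
      using v by simp
    have "(A *\<^sub>v v) $ i * (z + 1) = (z - 1) * v $ i"
      using comp[OF i] by (simp add: algebra_simps)
    then show "(A *\<^sub>v v) $ i = (((z - 1) / (z + 1)) \<cdot>\<^sub>v v) $ i"
      using i v z1 by (simp add: field_simps)
  qed (use A v in auto)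
  then have "eigenvalue A ((z - 1) / (z + 1))"
    using v A by (auto simp: eigenvalue_def eigenvector_def)
  then show ?thesis
    using stab z by (intro cmod_lt_1_if_cayley_Re_neg) (auto simp: stable_mat_def)
qed

text \<open>Substituting \<open>x = (I - A\<^sup>*) a\<close>, \<open>y = (I - A\<^sup>*) c\<close> turns the Lyapunov equation into the Stein
  equation of the Cayley transform.\<close>

lemma lyapunov_stein_identity:
  assumes A: "A \<in> carrier_mat n n" and X: "X \<in> carrier_mat n n" and R: "R \<in> carrier_mat n n"
    and Q: "Q \<in> carrier_mat n n" and QN: "Q * (1\<^sub>m n - A) = 1\<^sub>m n"
    and lyap: "A * X + X * mat_adjoint A = - R"
    and x: "x \<in> carrier_vec n" and y: "y \<in> carrier_vec n"
  defines "E \<equiv> mat_adjoint (Q * (1\<^sub>m n + A))"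
  shows "cinner x (X *\<^sub>v y) = cinner (E *\<^sub>v x) (X *\<^sub>v (E *\<^sub>v y))
    + 2 * cinner (mat_adjoint Q *\<^sub>v x) (R *\<^sub>v (mat_adjoint Q *\<^sub>v y))"
proof -
  have aA: "mat_adjoint A \<in> carrier_mat n n" and aQ: "mat_adjoint Q \<in> carrier_mat n n"
    using A Q by simp_all
  define a where "a = mat_adjoint Q *\<^sub>v x"
  define c where "c = mat_adjoint Q *\<^sub>v y"
  have a: "a \<in> carrier_vec n" and c: "c \<in> carrier_vec n"
    using aQ x y by (simp_all add: a_def c_def)
  define b where "b = mat_adjoint A *\<^sub>v a"
  define d where "d = mat_adjoint A *\<^sub>v c"
  have b: "b \<in> carrier_vec n" and d: "d \<in> carrier_vec n"
    using aA a c by (simp_all add: b_def d_def)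
  have "mat_adjoint (1\<^sub>m n - A) * mat_adjoint Q = 1\<^sub>m n"
    using arg_cong[OF QN, of mat_adjoint] mat_adjoint_mult[OF Q minus_carrier_mat[OF A]] by simp
  then have inv: "(1\<^sub>m n - mat_adjoint A) * mat_adjoint Q = 1\<^sub>m n"
    using mat_adjoint_minus[OF one_carrier_mat A] by simp
  have unshift: "z = mat_adjoint Q *\<^sub>v z - mat_adjoint A *\<^sub>v (mat_adjoint Q *\<^sub>v z)" if "z \<in> carrier_vec n" for z
    using that aA aQ inv assoc_mult_mat_vec[OF minus_carrier_mat[OF aA, of "1\<^sub>m n"] aQ that]
    by (simp add: minus_mult_distrib_mat_vec[of _ n n])
  have xab: "x = a - b" and ycd: "y = c - d"
    using unshift[OF x] unshift[OF y] by (simp_all add: a_def b_def c_def d_def)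
  have "E = (1\<^sub>m n + mat_adjoint A) * mat_adjoint Q"
    unfolding E_def using mat_adjoint_mult[OF Q add_carrier_mat[OF A]] mat_adjoint_add[OF one_carrier_mat A]
    by simp
  then have E_split: "E *\<^sub>v z = mat_adjoint Q *\<^sub>v z + mat_adjoint A *\<^sub>v (mat_adjoint Q *\<^sub>v z)"
    if "z \<in> carrier_vec n" for z
    using that aA aQ assoc_mult_mat_vec[OF add_carrier_mat[OF aA, of "1\<^sub>m n"] aQ that]
      add_mult_distrib_mat_vec[OF one_carrier_mat aA, of "mat_adjoint Q *\<^sub>v z"]
    by simp
  have Ex: "E *\<^sub>v x = a + b" and Ey: "E *\<^sub>v y = c + d"
    using E_split[OF x] E_split[OF y] by (simp_all add: a_def b_def c_def d_def)
  have Xc: "X *\<^sub>v c \<in> carrier_vec n" and Xd: "X *\<^sub>v d \<in> carrier_vec n"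
    using X c d by simp_all
  have cross: "cinner a (X *\<^sub>v d) + cinner b (X *\<^sub>v c) = - cinner a (R *\<^sub>v c)"
  proof -
    have "cinner b (X *\<^sub>v c) = cinner a (A *\<^sub>v (X *\<^sub>v c))"
      unfolding b_def using cinner_mult_mat_vec[OF A a Xc] by simp
    moreover have "A *\<^sub>v (X *\<^sub>v c) + X *\<^sub>v d = - (R *\<^sub>v c)"
      using arg_cong[OF lyap, of "\<lambda>M. M *\<^sub>v c"] A X aA R c
      by (simp add: d_def add_mult_distrib_mat_vec[of _ n n] assoc_mult_mat_vec[OF X aA c])
    moreover have "A *\<^sub>v (X *\<^sub>v c) \<in> carrier_vec n"
      using A Xc by simp
    ultimately show ?thesis
      using cinner_add_right[OF a Xd, of "A *\<^sub>v (X *\<^sub>v c)"] cinner_uminus_right[of "R *\<^sub>v c" a]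
        comm_add_vec[OF _ Xd, of "A *\<^sub>v (X *\<^sub>v c)"] R a c by simp
  qed
  have "cinner x (X *\<^sub>v y) = cinner (a - b) (X *\<^sub>v c - X *\<^sub>v d)"
    unfolding xab ycd using X c d by (simp add: mult_minus_distrib_mat_vec)
  also have "\<dots> = cinner (E *\<^sub>v x) (X *\<^sub>v (E *\<^sub>v y)) + 2 * cinner a (R *\<^sub>v c)"
    unfolding cinner_diff_diff[OF a b Xc Xd] cross Ex Ey using X c d by (simp add: mult_add_distrib_mat_vec)
  finally show ?thesis
    by (simp add: a_def c_def)
qed

lemma lyapunov_solution_psd:
  assumes A: "A \<in> carrier_mat n n" and stab: "stable_mat A" and X: "X \<in> carrier_mat n n"
    and R: "R \<in> carrier_mat n n" "psd_mat R" and lyap: "A * X + X * mat_adjoint A = - R"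
  shows "psd_mat X"
proof (cases "n = 0")
  case True
  then show ?thesis
    using X by (auto intro!: eq_matI simp: psd_mat_def cinner_def)
next
  case False
  define N where "N = 1\<^sub>m n - A"
  have N: "N \<in> carrier_mat n n"
    using A by (simp add: N_def minus_carrier_mat)
  have "det N \<noteq> 0"
  proof
    assume "det N = 0"
    then obtain v where v: "v \<in> carrier_vec n" "v \<noteq> 0\<^sub>v n" "N *\<^sub>v v = 0\<^sub>v n"
      using det_0_iff_vec_prod_zero_field[OF N] by auto
    then have Nv: "v - A *\<^sub>v v = 0\<^sub>v n"
      using A by (simp add: N_def minus_mult_distrib_mat_vec[of _ n n])
    have "A *\<^sub>v v = 1 \<cdot>\<^sub>v v"
    proof (rule eq_vecI)
      fix i assume "i < dim_vec (1 \<cdot>\<^sub>v v)"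
      then show "(A *\<^sub>v v) $ i = (1 \<cdot>\<^sub>v v) $ i"
        using arg_cong[OF Nv, of "\<lambda>x. x $ i"] A v by simp
    qed (use A v in auto)
    then have "eigenvalue A 1"
      using v A by (auto simp: eigenvalue_def eigenvector_def)
    with stab show False
      by (auto simp: stable_mat_def)
  qed
  define Q where "Q = (1 / det N) \<cdot>\<^sub>m adj_mat N"
  have Q: "Q \<in> carrier_mat n n"
    using adj_mat(1)[OF N] by (simp add: Q_def)
  have NQ: "N * Q = 1\<^sub>m n" and QN: "Q * N = 1\<^sub>m n"
    using adj_mat[OF N] \<open>det N \<noteq> 0\<close> by (auto simp: Q_def mult_smult_distrib[OF N] mult_smult_assoc_mat[OF _ N] intro!: eq_matI)
  define C where "C = Q * (1\<^sub>m n + A)"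
  have C: "C \<in> carrier_mat n n"
    using Q A by (simp add: C_def)
  obtain c r where r: "0 < r" "r < 1"
    and decay: "\<And>k i j. i < n \<Longrightarrow> j < n \<Longrightarrow> cmod ((C ^\<^sub>m k) $$ (i, j)) \<le> c * r ^ k"
    using pow_mat_entries_decay[OF C] cayley_transform_eigenvalue[OF A stab Q NQ[unfolded N_def]] False
    unfolding C_def by blast
  interpret stein_equation n X C "mat_adjoint Q" R c r
    using X C Q R r decay lyapunov_stein_identity[OF A X R(1) Q QN[unfolded N_def] lyap]
    by unfold_locales (simp_all add: C_def)
  show ?thesis
    by (rule X_psd)
qed

lemma psd_mat_mult_adjoint:
  assumes B: "B \<in> carrier_mat n r"
  shows "psd_mat (B * mat_adjoint B)"
proof -
  have "Re (cinner v ((B * mat_adjoint B) *\<^sub>v v)) \<ge> 0" if v: "v \<in> carrier_vec n" for v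
  proof -
    have Bv: "mat_adjoint B *\<^sub>v v \<in> carrier_vec r"
      using B v by (simp add: mult_mat_vec_carrier[OF mat_adjoint_carrier[OF B]])
    have "cinner v ((B * mat_adjoint B) *\<^sub>v v) = cinner (mat_adjoint B *\<^sub>v v) (mat_adjoint B *\<^sub>v v)"
      using cinner_mult_mat_vec[OF B v Bv] assoc_mult_mat_vec[OF B mat_adjoint_carrier[OF B] v] by simp
    then show ?thesis
      by (simp add: cinner_self)
  qed
  then show ?thesis
    using B mat_adjoint_mult[OF B mat_adjoint_carrier[OF B]] by (simp add: psd_mat_def)
qed

definition hermitian_part :: "complex mat \<Rightarrow> complex mat" where
  "hermitian_part A = (1 / 2 :: complex) \<cdot>\<^sub>m (A + mat_adjoint A)"

lemma hermitian_part_carrier: "A \<in> carrier_mat n n \<Longrightarrow> hermitian_part A \<in> carrier_mat n n"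
  by (simp add: hermitian_part_def)

lemma hermitian_part_hermitian:
  assumes "A \<in> carrier_mat n n"
  shows "mat_adjoint (hermitian_part A) = hermitian_part A"
  using assms comm_add_mat[OF assms mat_adjoint_carrier[OF assms]]
  by (simp add: hermitian_part_def mat_adjoint_smult mat_adjoint_add[OF assms mat_adjoint_carrier[OF assms]]
      mat_adjoint_add[OF mat_adjoint_carrier[OF assms] assms])

lemma Re_cinner_hermitian_part:
  assumes A: "A \<in> carrier_mat n n" and v: "v \<in> carrier_vec n"
  shows "Re (cinner v (hermitian_part A *\<^sub>v v)) = Re (cinner v (A *\<^sub>v v))"
proof -
  have Av: "A *\<^sub>v v \<in> carrier_vec n" and aAv: "mat_adjoint A *\<^sub>v v \<in> carrier_vec n"
    using A v mult_mat_vec_carrier[OF mat_adjoint_carrier[OF A] v] by simp_all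
  have "hermitian_part A *\<^sub>v v = (1 / 2 :: complex) \<cdot>\<^sub>v (A *\<^sub>v v + mat_adjoint A *\<^sub>v v)"
    unfolding hermitian_part_def using A v
    by (simp add: smult_mult_mat_vec[of _ n n] add_mult_distrib_mat_vec[of _ n n])
  moreover have "cinner v (mat_adjoint A *\<^sub>v v) = cnj (cinner v (A *\<^sub>v v))"
    using cinner_mult_mat_vec[OF mat_adjoint_carrier[OF A] v v] cinner_commute[of v "A *\<^sub>v v"] A v by simp
  ultimately have eq: "cinner v (hermitian_part A *\<^sub>v v) = (cinner v (A *\<^sub>v v) + cnj (cinner v (A *\<^sub>v v))) / 2"
    using Av aAv v by (simp add: cinner_smult_right[of _ n] cinner_add_right[of _ n])
  show ?thesis
    using arg_cong[OF eq, of Re] by simp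
qed

lemma rayleigh_lin_comb:
  assumes M: "M \<in> carrier_mat n n" and e: "orthonormal n J e" "finite J"
    and eigen: "\<And>j. j \<in> J \<Longrightarrow> M *\<^sub>v e j = complex_of_real (c j) \<cdot>\<^sub>v e j"
  shows "Re (cinner (lin_comb n J \<alpha> e) (M *\<^sub>v lin_comb n J \<alpha> e)) = (\<Sum>j\<in>J. c j * (cmod (\<alpha> j))\<^sup>2)"
proof -
  have "M *\<^sub>v lin_comb n J \<alpha> e = lin_comb n J (\<lambda>j. \<alpha> j * complex_of_real (c j)) e"
    using orthonormal_carrier[OF e(1)] eigen by (intro mult_mat_vec_lin_comb[OF M])
  then have "cinner (lin_comb n J \<alpha> e) (M *\<^sub>v lin_comb n J \<alpha> e)
      = (\<Sum>j\<in>J. complex_of_real (c j) * (cnj (\<alpha> j) * \<alpha> j))"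
    using cinner_lin_comb[OF e] by (simp add: ac_simps)
  then show ?thesis
    by (simp add: cnj_mult_self)
qed

lemma rayleigh_lin_comb_ge:
  assumes M: "M \<in> carrier_mat n n" and e: "orthonormal n J e" "finite J"
    and eigen: "\<And>j. j \<in> J \<Longrightarrow> M *\<^sub>v e j = complex_of_real (c j) \<cdot>\<^sub>v e j"
    and ge: "\<And>j. j \<in> J \<Longrightarrow> b \<le> c j"
  shows "b * (vnorm2 (lin_comb n J \<alpha> e))\<^sup>2 \<le> Re (cinner (lin_comb n J \<alpha> e) (M *\<^sub>v lin_comb n J \<alpha> e))"
proof -
  have "b * (vnorm2 (lin_comb n J \<alpha> e))\<^sup>2 = (\<Sum>j\<in>J. b * (cmod (\<alpha> j))\<^sup>2)"
    by (simp add: vnorm2_lin_comb[OF e] sum_distrib_left)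
  also have "\<dots> \<le> (\<Sum>j\<in>J. c j * (cmod (\<alpha> j))\<^sup>2)"
    using ge by (intro sum_mono mult_right_mono) auto
  finally show ?thesis
    using rayleigh_lin_comb[OF M e eigen, of \<alpha>] by simp
qed

lemma rayleigh_lin_comb_le:
  assumes M: "M \<in> carrier_mat n n" and e: "orthonormal n J e" "finite J"
    and eigen: "\<And>j. j \<in> J \<Longrightarrow> M *\<^sub>v e j = complex_of_real (c j) \<cdot>\<^sub>v e j"
    and le: "\<And>j. j \<in> J \<Longrightarrow> c j \<le> b"
  shows "Re (cinner (lin_comb n J \<alpha> e) (M *\<^sub>v lin_comb n J \<alpha> e)) \<le> b * (vnorm2 (lin_comb n J \<alpha> e))\<^sup>2"
proof -
  have "(\<Sum>j\<in>J. c j * (cmod (\<alpha> j))\<^sup>2) \<le> (\<Sum>j\<in>J. b * (cmod (\<alpha> j))\<^sup>2)"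
    using le by (intro sum_mono mult_right_mono) auto
  also have "\<dots> = b * (vnorm2 (lin_comb n J \<alpha> e))\<^sup>2"
    by (simp add: vnorm2_lin_comb[OF e] sum_distrib_left)
  finally show ?thesis
    using rayleigh_lin_comb[OF M e eigen, of \<alpha>] by simp
qed

lemma vnorm2_shift_lin_comb_le:
  assumes M: "M \<in> carrier_mat n n" and e: "orthonormal n J e" "finite J"
    and eigen: "\<And>j. j \<in> J \<Longrightarrow> M *\<^sub>v e j = complex_of_real (c j) \<cdot>\<^sub>v e j"
    and dist: "\<And>j. j \<in> J \<Longrightarrow> \<bar>a - c j\<bar> \<le> d" and d: "0 \<le> d"
  shows "vnorm2 (complex_of_real a \<cdot>\<^sub>v lin_comb n J \<alpha> e - M *\<^sub>v lin_comb n J \<alpha> e) \<le> d * vnorm2 (lin_comb n J \<alpha> e)"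
proof -
  have eq: "complex_of_real a \<cdot>\<^sub>v lin_comb n J \<alpha> e - M *\<^sub>v lin_comb n J \<alpha> e
      = lin_comb n J (\<lambda>j. \<alpha> j * complex_of_real (a - c j)) e"
    using mult_mat_vec_lin_comb[OF M orthonormal_carrier[OF e(1)] eigen] lin_comb_diff
    by (simp add: algebra_simps)
  have "(vnorm2 (lin_comb n J (\<lambda>j. \<alpha> j * complex_of_real (a - c j)) e))\<^sup>2
      = (\<Sum>j\<in>J. (cmod (\<alpha> j))\<^sup>2 * (a - c j)\<^sup>2)"
    unfolding vnorm2_lin_comb[OF e] by (simp add: norm_mult power_mult_distrib del: of_real_diff)
  also have "\<dots> \<le> (\<Sum>j\<in>J. (cmod (\<alpha> j))\<^sup>2 * d\<^sup>2)"
  proof (intro sum_mono mult_left_mono)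
    fix j assume "j \<in> J"
    have "\<bar>a - c j\<bar>\<^sup>2 \<le> d\<^sup>2"
      by (rule power_mono[OF dist[OF \<open>j \<in> J\<close>] abs_ge_zero])
    then show "(a - c j)\<^sup>2 \<le> d\<^sup>2"
      by simp
  qed simp
  also have "\<dots> = (d * vnorm2 (lin_comb n J \<alpha> e))\<^sup>2"
    unfolding power_mult_distrib vnorm2_lin_comb[OF e] by (simp add: sum_distrib_left mult.commute)
  finally show ?thesis
    unfolding eq by (rule power2_le_imp_le) (simp add: d vnorm2_nonneg)
qed

section \<open>The eigenvalue bounds\<close>

lemma normalized_bounds:
  fixes a s0 sm sk b w :: real
  assumes a: "0 < a" and s0: "0 < s0"
    and upper: "s0 * w \<le> a * (s0 - sm)" and lower: "- a * (s0 - sk) - b\<^sup>2 / 2 \<le> s0 * w"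
  shows "sk / s0 - 1 - b\<^sup>2 / (2 * s0 * a) \<le> w / a \<and> w / a \<le> 1 - sm / s0"
proof
  have "(- a * (s0 - sk) - b\<^sup>2 / 2) / (s0 * a) \<le> w / a"
    using lower a s0 by (simp add: divide_le_eq le_divide_eq mult.commute mult.left_commute)
  moreover have "(- a * (s0 - sk) - b\<^sup>2 / 2) / (s0 * a) = sk / s0 - 1 - b\<^sup>2 / (2 * s0 * a)"
    using a s0 by (simp add: field_simps)
  ultimately show "sk / s0 - 1 - b\<^sup>2 / (2 * s0 * a) \<le> w / a"
    by simp
next
  have "w / a \<le> (s0 - sm) / s0"
    using upper a s0 by (simp add: divide_le_eq le_divide_eq mult.commute)
  then show "w / a \<le> 1 - sm / s0"
    using s0 by (simp add: diff_divide_distrib)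
qed

locale hermitian_lyapunov =
  fixes A B X :: "complex mat" and n r :: nat
  assumes A: "A \<in> carrier_mat n n" and B: "B \<in> carrier_mat n r" and X: "X \<in> carrier_mat n n"
    and X_hermitian: "mat_adjoint X = X"
    and lyap: "A * X + X * mat_adjoint A = - (B * mat_adjoint B)"
begin

text \<open>Testing the Lyapunov equation against \<open>v\<close> gives \<open>2 Re \<langle>v, A X v\<rangle> = - \<parallel>B\<^sup>* v\<parallel>\<^sup>2\<close>; writing
  \<open>X v = a v - (a v - X v)\<close> turns this into an identity for \<open>Re \<langle>v, A v\<rangle>\<close>.\<close>

lemma form_identity:
  assumes v: "v \<in> carrier_vec n"
  shows "2 * a * Re (cinner v (A *\<^sub>v v))
    = 2 * Re (cinner v (A *\<^sub>v (complex_of_real a \<cdot>\<^sub>v v - X *\<^sub>v v))) - (vnorm2 (mat_adjoint B *\<^sub>v v))\<^sup>2"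
proof -
  have aA: "mat_adjoint A \<in> carrier_mat n n" and aB: "mat_adjoint B \<in> carrier_mat r n"
    using A B by simp_all
  have Xv: "X *\<^sub>v v \<in> carrier_vec n" and aAv: "mat_adjoint A *\<^sub>v v \<in> carrier_vec n"
    and aBv: "mat_adjoint B *\<^sub>v v \<in> carrier_vec r"
    using X v mult_mat_vec_carrier[OF aA v] mult_mat_vec_carrier[OF aB v] by simp_all
  define z where "z = cinner v (A *\<^sub>v (X *\<^sub>v v))"
  have "A *\<^sub>v (X *\<^sub>v v) + X *\<^sub>v (mat_adjoint A *\<^sub>v v) = - (B *\<^sub>v (mat_adjoint B *\<^sub>v v))"
    using arg_cong[OF lyap, of "\<lambda>M. M *\<^sub>v v"] A B X aA aB v
    by (simp add: add_mult_distrib_mat_vec[of _ n n] assoc_mult_mat_vec[of _ n n _ n]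
        assoc_mult_mat_vec[OF B aB v])
  then have "z + cinner v (X *\<^sub>v (mat_adjoint A *\<^sub>v v)) = - cinner (mat_adjoint B *\<^sub>v v) (mat_adjoint B *\<^sub>v v)"
    using cinner_add_right[of v n "A *\<^sub>v (X *\<^sub>v v)" "X *\<^sub>v (mat_adjoint A *\<^sub>v v)"]
      cinner_uminus_right[of "B *\<^sub>v (mat_adjoint B *\<^sub>v v)" v] cinner_mult_mat_vec[OF B v aBv]
      A X B v Xv aAv aBv
    by (simp add: z_def)
  moreover have "cinner v (X *\<^sub>v (mat_adjoint A *\<^sub>v v)) = cnj z"
    using cinner_mult_mat_vec[OF X v aAv] cinner_commute[of "mat_adjoint A *\<^sub>v v" "X *\<^sub>v v"]
      cinner_mult_mat_vec[OF A v Xv] X_hermitian A X v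
    by (simp add: z_def)
  ultimately have "z + cnj z = - complex_of_real ((vnorm2 (mat_adjoint B *\<^sub>v v))\<^sup>2)"
    by (simp add: cinner_self)
  then have "2 * Re z = - (vnorm2 (mat_adjoint B *\<^sub>v v))\<^sup>2"
    by (simp add: complex_add_cnj complex_eq_iff)
  moreover have "cinner v (A *\<^sub>v (complex_of_real a \<cdot>\<^sub>v v - X *\<^sub>v v)) = complex_of_real a * cinner v (A *\<^sub>v v) - z"
    using A X v Xv
    by (simp add: z_def mult_minus_distrib_mat_vec[of _ n n] mult_mat_vec cinner_diff_right[of _ n]
        cinner_smult_right[of _ n])
  ultimately show ?thesis
    by simp
qed

lemma rayleigh_upper:
  assumes v: "v \<in> carrier_vec n"
  shows "a * Re (cinner v (hermitian_part A *\<^sub>v v))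
    \<le> spec_norm A * vnorm2 v * vnorm2 (complex_of_real a \<cdot>\<^sub>v v - X *\<^sub>v v)"
proof -
  have y: "complex_of_real a \<cdot>\<^sub>v v - X *\<^sub>v v \<in> carrier_vec n"
    using X v by simp
  have "2 * a * Re (cinner v (hermitian_part A *\<^sub>v v))
      \<le> 2 * Re (cinner v (A *\<^sub>v (complex_of_real a \<cdot>\<^sub>v v - X *\<^sub>v v)))"
    using form_identity[OF v, of a] Re_cinner_hermitian_part[OF A v] by simp
  also have "\<dots> \<le> 2 * (spec_norm A * vnorm2 v * vnorm2 (complex_of_real a \<cdot>\<^sub>v v - X *\<^sub>v v))"
    using complex_Re_le_cmod[of "cinner v (A *\<^sub>v (complex_of_real a \<cdot>\<^sub>v v - X *\<^sub>v v))"]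
      cmod_cinner_mult_mat_vec_le[OF A v y] by linarith
  finally show ?thesis
    by simp
qed

lemma rayleigh_lower:
  assumes v: "v \<in> carrier_vec n"
  shows "- spec_norm A * vnorm2 v * vnorm2 (complex_of_real a \<cdot>\<^sub>v v - X *\<^sub>v v) - (spec_norm B)\<^sup>2 * (vnorm2 v)\<^sup>2 / 2
    \<le> a * Re (cinner v (hermitian_part A *\<^sub>v v))"
proof -
  have y: "complex_of_real a \<cdot>\<^sub>v v - X *\<^sub>v v \<in> carrier_vec n"
    using X v by simp
  have "(vnorm2 (mat_adjoint B *\<^sub>v v))\<^sup>2 \<le> (spec_norm B * vnorm2 v)\<^sup>2"
    using vnorm2_adjoint_mult_le[OF B v] vnorm2_nonneg by (intro power_mono) auto
  moreover have "- 2 * (spec_norm A * vnorm2 v * vnorm2 (complex_of_real a \<cdot>\<^sub>v v - X *\<^sub>v v))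
      \<le> 2 * Re (cinner v (A *\<^sub>v (complex_of_real a \<cdot>\<^sub>v v - X *\<^sub>v v)))"
    using abs_Re_le_cmod[of "cinner v (A *\<^sub>v (complex_of_real a \<cdot>\<^sub>v v - X *\<^sub>v v))"]
      cmod_cinner_mult_mat_vec_le[OF A v y] by linarith
  ultimately show ?thesis
    using form_identity[OF v, of a] Re_cinner_hermitian_part[OF A v] by (simp add: power_mult_distrib)
qed

end

locale lyapunov_spectra = hermitian_lyapunov +
  fixes s \<omega> :: "real list" and u w :: "nat \<Rightarrow> complex vec"
  assumes s: "length s = n" "sorted_wrt (\<ge>) s" "\<forall>x\<in>set s. x \<ge> 0"
    and u: "orthonormal_eigenbasis X (nth s) u"
    and \<omega>: "length \<omega> = n" "sorted_wrt (\<ge>) \<omega>"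
    and w: "orthonormal_eigenbasis (hermitian_part A) (nth \<omega>) w"
begin

lemma H_carrier: "hermitian_part A \<in> carrier_mat n n"
  using A by (rule hermitian_part_carrier)

lemma u_orthonormal: "orthonormal n {..<n} u" and u_eigen: "j < n \<Longrightarrow> X *\<^sub>v u j = complex_of_real (s ! j) \<cdot>\<^sub>v u j"
  using u X by (auto simp: orthonormal_eigenbasis_def)

lemma w_orthonormal: "orthonormal n {..<n} w"
  and w_eigen: "j < n \<Longrightarrow> hermitian_part A *\<^sub>v w j = complex_of_real (\<omega> ! j) \<cdot>\<^sub>v w j"
  using w H_carrier by (auto simp: orthonormal_eigenbasis_def)

lemma s_le: "i \<le> j \<Longrightarrow> j < n \<Longrightarrow> s ! j \<le> s ! i"
  using sorted_wrt_ge_nth[OF s(2)] s(1) by simp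

lemma \<omega>_le: "i \<le> j \<Longrightarrow> j < n \<Longrightarrow> \<omega> ! j \<le> \<omega> ! i"
  using sorted_wrt_ge_nth[OF \<omega>(2)] \<omega>(1) by simp

lemma s_nonneg: "j < n \<Longrightarrow> 0 \<le> s ! j"
  using s by auto

lemma s_dist: "j \<le> m \<Longrightarrow> m < n \<Longrightarrow> \<bar>s ! 0 - s ! j\<bar> \<le> s ! 0 - s ! m"
  using s_le[of 0 j] s_le[of j m] by auto

text \<open>By counting dimensions there is a nonzero \<open>V\<close> in the span of \<open>w 0, \<dots>, w i\<close> and of
  \<open>u 0, \<dots>, u (n - Suc i)\<close>; there \<open>Re \<langle>V, H V\<rangle> \<ge> \<omega> ! i \<parallel>V\<parallel>\<^sup>2\<close> and
  \<open>\<parallel>s ! 0 V - X V\<parallel> \<le> (s ! 0 - s ! (n - Suc i)) \<parallel>V\<parallel>\<close>.\<close>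

lemma eigenvalue_upper:
  assumes i: "i < n"
  shows "s ! 0 * \<omega> ! i \<le> spec_norm A * (s ! 0 - s ! (n - Suc i))"
proof -
  have ow: "orthonormal n {..<Suc i} w" and ou: "orthonormal n {..<n - i} u"
    using i w_orthonormal u_orthonormal by (auto intro: orthonormal_subset)
  obtain \<alpha> \<beta> where eq: "lin_comb n {..<Suc i} \<alpha> w = lin_comb n {..<n - i} \<beta> u"
    and nz: "lin_comb n {..<Suc i} \<alpha> w \<noteq> 0\<^sub>v n"
    using orthonormal_spans_intersect[OF ow ou] i by auto
  define V where "V = lin_comb n {..<Suc i} \<alpha> w"
  have V: "V \<in> carrier_vec n"
    by (simp add: V_def)
  have "V \<noteq> 0\<^sub>v n" and "dim_vec V = n"
    using nz by (simp_all add: V_def lin_comb_def)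
  then have N: "(vnorm2 V)\<^sup>2 > 0"
    using vnorm2_pos_iff[of V] by simp
  have "\<omega> ! i * (vnorm2 V)\<^sup>2 \<le> Re (cinner V (hermitian_part A *\<^sub>v V))"
    unfolding V_def using i by (intro rayleigh_lin_comb_ge[OF H_carrier ow]) (auto intro: w_eigen \<omega>_le)
  then have "s ! 0 * (\<omega> ! i * (vnorm2 V)\<^sup>2) \<le> s ! 0 * Re (cinner V (hermitian_part A *\<^sub>v V))"
    using i s_nonneg by (intro mult_left_mono) auto
  also have "\<dots> \<le> spec_norm A * vnorm2 V * vnorm2 (complex_of_real (s ! 0) \<cdot>\<^sub>v V - X *\<^sub>v V)"
    by (rule rayleigh_upper[OF V])
  also have "\<dots> \<le> spec_norm A * vnorm2 V * ((s ! 0 - s ! (n - Suc i)) * vnorm2 V)"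
    unfolding V_def eq using i
    by (intro mult_left_mono vnorm2_shift_lin_comb_le[OF X ou] mult_nonneg_nonneg spec_norm_nonneg vnorm2_nonneg)
      (auto intro: u_eigen s_dist s_le)
  finally have "(s ! 0 * \<omega> ! i) * (vnorm2 V)\<^sup>2 \<le> (spec_norm A * (s ! 0 - s ! (n - Suc i))) * (vnorm2 V)\<^sup>2"
    by (simp add: power2_eq_square algebra_simps)
  then show ?thesis
    using N by (simp add: mult_le_cancel_right_pos)
qed

lemma eigenvalue_lower:
  assumes i: "i < n"
  shows "- spec_norm A * (s ! 0 - s ! i) - (spec_norm B)\<^sup>2 / 2 \<le> s ! 0 * \<omega> ! i"
proof -
  define w' where "w' j = w (i + j)" for j
  have ou: "orthonormal n {..<Suc i} u"
    using i u_orthonormal by (auto intro: orthonormal_subset)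
  have ow: "orthonormal n {..<n - i} w'"
    using w_orthonormal by (auto simp: orthonormal_def w'_def)
  obtain \<alpha> \<beta> where eq: "lin_comb n {..<Suc i} \<alpha> u = lin_comb n {..<n - i} \<beta> w'"
    and nz: "lin_comb n {..<Suc i} \<alpha> u \<noteq> 0\<^sub>v n"
    using orthonormal_spans_intersect[OF ou ow] i by auto
  define V where "V = lin_comb n {..<Suc i} \<alpha> u"
  have V: "V \<in> carrier_vec n"
    by (simp add: V_def)
  have "V \<noteq> 0\<^sub>v n" and "dim_vec V = n"
    using nz by (simp_all add: V_def lin_comb_def)
  then have N: "(vnorm2 V)\<^sup>2 > 0"
    using vnorm2_pos_iff[of V] by simp
  have y: "vnorm2 (complex_of_real (s ! 0) \<cdot>\<^sub>v V - X *\<^sub>v V) \<le> (s ! 0 - s ! i) * vnorm2 V"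
    unfolding V_def using i
    by (intro vnorm2_shift_lin_comb_le[OF X ou]) (auto intro: u_eigen s_dist s_le)
  have "- spec_norm A * (s ! 0 - s ! i) * (vnorm2 V)\<^sup>2 - (spec_norm B)\<^sup>2 * (vnorm2 V)\<^sup>2 / 2
      \<le> - spec_norm A * vnorm2 V * vnorm2 (complex_of_real (s ! 0) \<cdot>\<^sub>v V - X *\<^sub>v V)
        - (spec_norm B)\<^sup>2 * (vnorm2 V)\<^sup>2 / 2"
    using mult_left_mono[OF y, of "spec_norm A * vnorm2 V"] spec_norm_nonneg[of A] vnorm2_nonneg[of V]
    by (simp add: power2_eq_square algebra_simps)
  also have "\<dots> \<le> s ! 0 * Re (cinner V (hermitian_part A *\<^sub>v V))"
    by (rule rayleigh_lower[OF V])
  also have "\<dots> \<le> s ! 0 * (\<omega> ! i * (vnorm2 V)\<^sup>2)"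
    unfolding V_def eq using i s_nonneg
    by (intro mult_left_mono rayleigh_lin_comb_le[OF H_carrier ow]) (auto simp: w'_def intro: w_eigen \<omega>_le)
  finally have "(- spec_norm A * (s ! 0 - s ! i) - (spec_norm B)\<^sup>2 / 2) * (vnorm2 V)\<^sup>2
      \<le> (s ! 0 * \<omega> ! i) * (vnorm2 V)\<^sup>2"
    by (simp add: power2_eq_square algebra_simps)
  then show ?thesis
    using N by (simp add: mult_le_cancel_right_pos)
qed

lemma eigenvalue_abs_le:
  assumes i: "i < n"
  shows "\<bar>\<omega> ! i\<bar> \<le> spec_norm A"
proof -
  have wi: "w i \<in> carrier_vec n" and "cinner (w i) (w i) = 1"
    using w_orthonormal i by (auto simp: orthonormal_def)
  then have norm1: "vnorm2 (w i) = 1"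
    by (simp add: vnorm2_eq_1_iff_cinner)
  have "\<omega> ! i = Re (cinner (w i) (hermitian_part A *\<^sub>v w i))"
    using w_eigen[OF i] wi \<open>cinner (w i) (w i) = 1\<close> by (simp add: cinner_smult_right)
  also have "\<dots> = Re (cinner (w i) (A *\<^sub>v w i))"
    by (rule Re_cinner_hermitian_part[OF A wi])
  finally show ?thesis
    using abs_Re_le_cmod[of "cinner (w i) (A *\<^sub>v w i)"] cmod_cinner_mult_mat_vec_le[OF A wi wi] norm1
    by simp
qed

text \<open>For \<open>s ! 0 = 0\<close> both sides of the bounds degenerate through division by zero to \<open>-1\<close> and \<open>1\<close>;
  this is the only case where controllability (which forces \<open>X\<close> to be definite) would matter.\<close>

lemma eigenvalue_bounds:
  assumes k: "k \<in> {1..n}" and A_pos: "0 < spec_norm A"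
  shows "s ! (k - 1) / s ! 0 - 1 - (spec_norm B)\<^sup>2 / (2 * s ! 0 * spec_norm A) \<le> \<omega> ! (k - 1) / spec_norm A
    \<and> \<omega> ! (k - 1) / spec_norm A \<le> 1 - s ! (n - k) / s ! 0"
proof -
  have i: "k - 1 < n" and nk: "n - k = n - Suc (k - 1)"
    using k by auto
  show ?thesis
  proof (cases "s ! 0 = 0")
    case True
    then show ?thesis
      using eigenvalue_abs_le[OF i] A_pos by (simp add: abs_le_iff divide_le_eq le_divide_eq)
  next
    case False
    then have "0 < s ! 0"
      using s_nonneg[of 0] i by simp
    then show ?thesis
      using normalized_bounds[OF A_pos _ eigenvalue_upper[OF i] eigenvalue_lower[OF i]] nk by simp
  qed
qed

end

theorem theorem5p1:
  fixes A B X :: "complex mat" and n r :: nat and s \<omega> :: "real list"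
  assumes A: "A \<in> carrier_mat n n" and B: "B \<in> carrier_mat n r" and X: "X \<in> carrier_mat n n"
    and stab: "stable_mat A"
    and ctrl: "controllable A B"
    and lyap: "A * X + X * mat_adjoint A = - (B * mat_adjoint B)"
    and sv: "singular_values X s"
    and ev: "sorted_real_eigenvalues ((1/2 :: complex) \<cdot>\<^sub>m (A + mat_adjoint A)) \<omega>"
  shows "\<forall>k\<in>{1..n}.
     s ! (k - 1) / s ! 0 - 1 - (spec_norm B)\<^sup>2 / (2 * s ! 0 * spec_norm A) \<le> \<omega> ! (k - 1) / spec_norm A
   \<and> \<omega> ! (k - 1) / spec_norm A \<le> 1 - s ! (n - k) / s ! 0"
proof (cases "n = 0")
  case False
  have psd: "psd_mat X"
    using lyapunov_solution_psd[OF A stab X _ psd_mat_mult_adjoint[OF B] lyap] B by simp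
  obtain u where u: "orthonormal_eigenbasis X (nth s) u"
    using psd_singular_value_eigenbasis[OF X psd sv] by blast
  obtain w where w: "orthonormal_eigenbasis (hermitian_part A) (nth \<omega>) w"
    using hermitian_sorted_eigenbasis[OF hermitian_part_carrier[OF A] hermitian_part_hermitian[OF A]]
      ev[folded hermitian_part_def] by blast
  interpret lyapunov_spectra A B X n r s \<omega> u w
    using A B X psd lyap u w sv ev[folded hermitian_part_def] singular_values_sorted[OF sv]
      hermitian_part_carrier[OF A]
    by unfold_locales (auto simp: psd_mat_def singular_values_def sorted_real_eigenvalues_def)
  have "0 < spec_norm A"
    using spec_norm_pos_if_stable[OF A _ stab] False by simp
  then show ?thesis
    using eigenvalue_bounds by blast
qed simp

end
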